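(* Let $X_1,\dots,X_n$ be i.i.d. from $P$ on $[0,1]^r$ with density $p$ satisfying $|p(x)-p(y)|\le L\|x-y\|$ for all $x,y$ (some constant $L>0$), and let $F$ be its cdf. Let $Z_1,\dots,Z_k$ be, given $X$, i.i.d. draws from $\hat f_{m,\delta}=(1-\delta)\hat f_m+\delta$, where $m\asymp n^{r/(6+r)}$, $k\asymp n^{4/(6+r)}$ and $\delta=mk/(n\alpha)$ (so that $\alpha$-differential privacy holds). Then $$\mathbb E\sup_{x\in[0,1]^r}|F(x)-\hat F_Z(x)|=O\Big(\frac{\sqrt{\log n}}{n^{2/(6+r)}}\Big).$$
   Context: Histogram: let $0<h<1$ be a binwidth with $m=h^{-r}$ an integer, and partition $[0,1]^r$ into $m$ cubes $B_1,\dots,B_m$ of side $h$. Let $C_j=\sum_{i=1}^n I(X_i\in B_j)$, $\hat p_j=C_j/n$, and $\hat f_m(x)=\sum_{j=1}^m (\hat p_j/h^r)I(x\in B_j)$. $\hat F_Z(t)=k^{-1}\#\{i: Z_i\le t\}$ (componentwise order) is the empirical cdf of $Z$; $F(t)=P(X\le t)$ componentwise. $\mathbb E$ is the expectation over both $X\sim P^n$ and the randomness of $Z$ given $X$. $a_n\asymp b_n$ means $a_n/b_n$ and $b_n/a_n$ are bounded for large $n$. The constant $\alpha>0$ is fixed. *)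

theory Defs
  imports "HOL-Probability.Probability" "HOL-Library.Landau_Symbols"
begin

text \<open>Points of [0,1]^r are vectors of type real^'r, with r = CARD('r).\<close>

definition unit_cube :: "(real ^ 'r) set" where
  "unit_cube = {x. \<forall>i. 0 \<le> x $ i \<and> x $ i \<le> 1}"

definition vle :: "real ^ 'r \<Rightarrow> real ^ 'r \<Rightarrow> bool" where
  "vle x y \<longleftrightarrow> (\<forall>i. x $ i \<le> y $ i)"

text \<open>Histogram with N bins per side (binwidth h = 1/N, m = N^r cubes).
  The cube containing x is indexed by bin_idx N x; the right boundary 1 is put in the last bin.\<close>
definition bin_idx :: "nat \<Rightarrow> real ^ 'r \<Rightarrow> 'r \<Rightarrow> nat" where
  "bin_idx N x = (\<lambda>i. min (N - 1) (nat \<lfloor>real N * x $ i\<rfloor>))"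

text \<open>hat f_m(x) = (C_j / n) / h^r for x in B_j, with C_j the count of sample points in B_j.\<close>
definition hist :: "nat \<Rightarrow> nat \<Rightarrow> (nat \<Rightarrow> real ^ 'r) \<Rightarrow> real ^ 'r \<Rightarrow> real" where
  "hist N n xs x =
     (if x \<in> unit_cube then
        real (card {i \<in> {..<n}. xs i \<in> unit_cube \<and> bin_idx N (xs i) = bin_idx N x})
          / real n * real N ^ CARD('r)
      else 0)"

definition priv_density :: "nat \<Rightarrow> nat \<Rightarrow> real \<Rightarrow> (nat \<Rightarrow> real ^ 'r) \<Rightarrow> real ^ 'r \<Rightarrow> real" where
  "priv_density N n \<delta> xs z = indicator unit_cube z * ((1 - \<delta>) * hist N n xs z + \<delta>)"

definition cdf_vec :: "(real ^ 'r) measure \<Rightarrow> real ^ 'r \<Rightarrow> real" where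
  "cdf_vec P t = measure P {x \<in> space P. vle x t}"

definition ecdf_vec :: "nat \<Rightarrow> (nat \<Rightarrow> real ^ 'r) \<Rightarrow> real ^ 'r \<Rightarrow> real" where
  "ecdf_vec k zs t = real (card {i \<in> {..<k}. vle (zs i) t}) / real k"

definition expected_sup_error ::
  "(real ^ 'r) measure \<Rightarrow> nat \<Rightarrow> nat \<Rightarrow> nat \<Rightarrow> real \<Rightarrow> ennreal" where
  "expected_sup_error P n N k \<delta> =
     (\<integral>\<^sup>+ xs. (\<integral>\<^sup>+ zs. (SUP x\<in>unit_cube. ennreal \<bar>cdf_vec P x - ecdf_vec k zs x\<bar>)
         \<partial>(PiM {..<k} (\<lambda>_. density lborel (\<lambda>z. ennreal (priv_density N n \<delta> xs z)))))
       \<partial>(PiM {..<n} (\<lambda>_. P)))"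

end

theory Submission
  imports Defs
begin

text \<open>
  Write \<open>P\<close> for the law with density \<open>p\<close>, \<open>F\<close> for its cdf, \<open>Q\<close> for the privatized histogram
  distribution \<open>(1 - \<delta>) hat f_m + \<delta>\<close> built from the data \<open>X\<close>, and \<open>hat F_Z\<close> for the empirical cdf of
  the synthetic sample \<open>Z ~ Q^k\<close>.  For every \<open>t\<close> in the cube
    \<open>|F t - hat F_Z t| \<le> |F t - F_Q t| + |F_Q t - hat F_Z t|\<close>, and
    \<open>|F t - F_Q t| \<le> 2 L r\<^sup>2 / N\<^sup>2 + \<Sum>\<^sub>j |P(B_j) - C_j/n| + \<delta>\<close>
  (binning bias, histogram error, privacy mixing).  The supremum over \<open>t\<close> of the second term
  is reduced to a maximum over a finite grid of resolution \<open>1/(N^r k)\<close>, at a price controlled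
  by the density bound \<open>N^r + 1\<close> of \<open>Q\<close>.  Hoeffding's inequality with a union bound then
  controls both random parts: the grid orthants for \<open>Z\<close> given \<open>X\<close>, and all unions of bins
  for \<open>X\<close> (which bounds the \<open>\<ell>\<^sub>1\<close> histogram error).  This gives a non-asymptotic bound
  (lemma \<open>expected_sup_error_bound\<close>) valid for all \<open>n, N, k, \<delta>\<close>; choosing the two
  Hoeffding levels \<open>\<surd>(ln(events \<cdot> size) / (2 size))\<close> and inserting the rates
  \<open>N^r \<asymp> n^(r/(6+r))\<close>, \<open>k \<asymp> n^(4/(6+r))\<close> makes every term \<open>O(\<surd>(ln n) n^(-2/(6+r)))\<close>.
\<close>

definition empirical_freq :: "nat \<Rightarrow> (nat \<Rightarrow> 'a) \<Rightarrow> 'a set \<Rightarrow> real" where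
  "empirical_freq n xs S = real (card {i\<in>{..<n}. xs i \<in> S}) / real n"

lemma empirical_freq_eq_sum_indicator:
  "empirical_freq n xs S = (\<Sum>i<n. indicator S (xs i)) / real n"
proof -
  have "(\<Sum>i<n. indicator S (xs i) :: real) = (\<Sum>i\<in>{..<n}. if xs i \<in> S then 1 else 0)"
    by (simp add: indicator_def of_bool_def)
  also have "\<dots> = (\<Sum>i\<in>{i\<in>{..<n}. xs i \<in> S}. 1)"
    by (rule sum.inter_filter[symmetric]) simp
  finally have "(\<Sum>i<n. indicator S (xs i)) = real (card {i\<in>{..<n}. xs i \<in> S})"
    by simp
  thus ?thesis by (simp add: empirical_freq_def)
qed

lemma empirical_freq_bounds: "0 \<le> empirical_freq n xs S" "empirical_freq n xs S \<le> 1"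
proof -
  show "0 \<le> empirical_freq n xs S" by (simp add: empirical_freq_def)
  have "card {i\<in>{..<n}. xs i \<in> S} \<le> card {..<n}" by (intro card_mono) auto
  thus "empirical_freq n xs S \<le> 1" by (cases "n = 0") (auto simp: empirical_freq_def)
qed

lemma indep_vars_PiM_coordinates:
  assumes M: "prob_space M" and I: "I \<noteq> {}"
  shows "prob_space.indep_vars (PiM I (\<lambda>_. M)) (\<lambda>_. M) (\<lambda>i \<omega>. \<omega> i) I"
proof -
  interpret PS: prob_space "PiM I (\<lambda>_. M)"
    by (intro prob_space_PiM) (use M in auto)
  have "distr (PiM I (\<lambda>_. M)) (PiM I (\<lambda>_. M)) (\<lambda>x. \<lambda>i\<in>I. x i) = PiM I (\<lambda>_. M)"
    by (subst distr_cong[where g = "\<lambda>x. x"]) (auto simp: space_PiM PiE_def extensional_restrict)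
  also have "\<dots> = PiM I (\<lambda>i. distr (PiM I (\<lambda>_. M)) M (\<lambda>\<omega>. \<omega> i))"
    by (intro PiM_cong refl distr_PiM_component[symmetric]) (use M in auto)
  finally show ?thesis
    by (subst PS.indep_vars_iff_distr_eq_PiM'[OF I]) auto
qed

lemma hoeffding_empirical_freq:
  assumes M: "prob_space M" and n: "n > 0" and S: "S \<in> sets M" and eps: "\<epsilon> \<ge> 0"
  shows "emeasure (PiM {..<n} (\<lambda>_. M))
           {xs \<in> space (PiM {..<n} (\<lambda>_. M)). \<epsilon> \<le> \<bar>empirical_freq n xs S - measure M S\<bar>}
         \<le> ennreal (2 * exp (-2 * real n * \<epsilon>\<^sup>2))"
proof -
  let ?P = "PiM {..<n} (\<lambda>_. M)"
  interpret PS: prob_space ?P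
    by (intro prob_space_PiM) (use M in auto)
  have I: "{..<n} \<noteq> {}" using n by auto
  have ind: "PS.indep_vars (\<lambda>_. borel) (\<lambda>i \<omega>. indicator S (\<omega> i) :: real) {..<n}"
    using PS.indep_vars_compose2[OF indep_vars_PiM_coordinates[OF M I],
        of "\<lambda>_ x. indicator S x" "\<lambda>_. borel"] S
    by auto
  interpret H: Hoeffding_ineq ?P "{..<n}" "\<lambda>i \<omega>. indicator S (\<omega> i) :: real" "\<lambda>_. 0" "\<lambda>_. 1"
    "\<Sum>i<n. PS.expectation (\<lambda>\<omega>. indicator S (\<omega> i) :: real)"
    by unfold_locales (use ind in \<open>auto simp: indicator_def\<close>)
  have mean: "PS.expectation (\<lambda>\<omega>. indicator S (\<omega> i) :: real) = measure M S" if "i < n" for i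
  proof -
    have "PS.expectation (\<lambda>\<omega>. indicator S (\<omega> i) :: real)
        = integral\<^sup>L (distr ?P M (\<lambda>\<omega>. \<omega> i)) (indicator S)"
      by (subst integral_distr) (use S that in auto)
    also have "distr ?P M (\<lambda>\<omega>. \<omega> i) = M"
      by (rule distr_PiM_component) (use M that in auto)
    finally show ?thesis using S by simp
  qed
  have rescale: "\<epsilon> \<le> \<bar>a / real n - b\<bar> \<longleftrightarrow> real n * \<epsilon> \<le> \<bar>a - real n * b\<bar>" for a b
  proof -
    have "\<bar>a - real n * b\<bar> = real n * \<bar>a / real n - b\<bar>" using n
      by (simp add: field_simps abs_mult[symmetric])
    thus ?thesis using n by (simp add: mult_le_cancel_left_pos)
  qed
  have "PS.prob {xs \<in> space ?P. real n * \<epsilon> \<le>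
          \<bar>(\<Sum>i<n. indicator S (xs i)) - (\<Sum>i<n. PS.expectation (\<lambda>\<omega>. indicator S (\<omega> i)))\<bar>}
        \<le> 2 * exp (-2 * (real n * \<epsilon>)\<^sup>2 / (\<Sum>i<n. (1 - 0)\<^sup>2))"
    using H.Hoeffding_ineq_abs_ge[of "real n * \<epsilon>"] eps n by simp
  moreover have "-2 * (real n * \<epsilon>)\<^sup>2 / (\<Sum>i<n. (1 - (0::real))\<^sup>2) = -2 * real n * \<epsilon>\<^sup>2"
    using n by (simp add: power2_eq_square)
  ultimately show ?thesis
    using mean by (simp add: PS.emeasure_eq_measure empirical_freq_eq_sum_indicator rescale)
qed

lemma deviation_event_sets:
  assumes S: "S \<in> sets M"
  shows "{xs \<in> space (PiM {..<n} (\<lambda>_. M)). \<epsilon> \<le> \<bar>empirical_freq n xs S - measure M S\<bar>}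
           \<in> sets (PiM {..<n} (\<lambda>_. M))"
proof -
  have [measurable]: "S \<in> sets M" by (rule S)
  show ?thesis unfolding empirical_freq_eq_sum_indicator by measurable
qed

lemma emeasure_some_deviation:
  assumes M: "prob_space M" and n: "n > 0" and fin: "finite SS" and SS: "SS \<subseteq> sets M"
    and eps: "\<epsilon> \<ge> 0"
  shows "emeasure (PiM {..<n} (\<lambda>_. M))
           {xs \<in> space (PiM {..<n} (\<lambda>_. M)). \<exists>S\<in>SS. \<epsilon> \<le> \<bar>empirical_freq n xs S - measure M S\<bar>}
         \<le> ennreal (2 * real (card SS) * exp (-2 * real n * \<epsilon>\<^sup>2))"
proof -
  let ?P = "PiM {..<n} (\<lambda>_. M)"
  define E where "E S = {xs \<in> space ?P. \<epsilon> \<le> \<bar>empirical_freq n xs S - measure M S\<bar>}" for S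
  have E_sets: "E S \<in> sets ?P" if "S \<in> SS" for S
    unfolding E_def using that SS by (intro deviation_event_sets) auto
  have "{xs \<in> space ?P. \<exists>S\<in>SS. \<epsilon> \<le> \<bar>empirical_freq n xs S - measure M S\<bar>} = (\<Union>S\<in>SS. E S)"
    by (auto simp: E_def)
  also have "emeasure ?P \<dots> \<le> (\<Sum>S\<in>SS. emeasure ?P (E S))"
    using E_sets fin by (intro emeasure_subadditive_finite) auto
  also have "\<dots> \<le> (\<Sum>S\<in>SS. ennreal (2 * exp (-2 * real n * \<epsilon>\<^sup>2)))"
    unfolding E_def by (intro sum_mono hoeffding_empirical_freq[OF M n _ eps]) (use SS in auto)
  also have "\<dots> = ennreal (2 * real (card SS) * exp (-2 * real n * \<epsilon>\<^sup>2))"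
    by (simp add: ennreal_of_nat_eq_real_of_nat ennreal_mult mult.assoc mult.left_commute)
  finally show ?thesis .
qed

lemma nn_integral_le_by_deviation:
  assumes M: "prob_space M" and n: "n > 0" and fin: "finite SS" and SS: "SS \<subseteq> sets M"
    and eps: "\<epsilon> \<ge> 0" and c: "c \<ge> 0" and a: "a \<ge> 0"
    and f: "\<And>xs. xs \<in> space (PiM {..<n} (\<lambda>_. M)) \<Longrightarrow> f xs \<le> ennreal (c + a) \<and>
      (f xs \<le> ennreal (c + a * \<epsilon>) \<or> (\<exists>S\<in>SS. \<epsilon> \<le> \<bar>empirical_freq n xs S - measure M S\<bar>))"
  shows "(\<integral>\<^sup>+ xs. f xs \<partial>PiM {..<n} (\<lambda>_. M))
           \<le> ennreal (c + a * (\<epsilon> + 2 * real (card SS) * exp (-2 * real n * \<epsilon>\<^sup>2)))"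
proof -
  let ?P = "PiM {..<n} (\<lambda>_. M)"
  interpret PS: prob_space ?P
    by (intro prob_space_PiM) (use M in auto)
  define B where "B = {xs \<in> space ?P. \<exists>S\<in>SS. \<epsilon> \<le> \<bar>empirical_freq n xs S - measure M S\<bar>}"
  have "B = (\<Union>S\<in>SS. {xs \<in> space ?P. \<epsilon> \<le> \<bar>empirical_freq n xs S - measure M S\<bar>})"
    by (auto simp: B_def)
  also have "\<dots> \<in> sets ?P" using fin SS by (intro sets.finite_UN ballI deviation_event_sets) auto
  finally have B_sets: "B \<in> sets ?P" .
  have "(\<integral>\<^sup>+ xs. f xs \<partial>?P) \<le> (\<integral>\<^sup>+ xs. ennreal (c + a * \<epsilon>) + ennreal a * indicator B xs \<partial>?P)"
  proof (rule nn_integral_mono)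
    fix xs assume xs: "xs \<in> space ?P"
    show "f xs \<le> ennreal (c + a * \<epsilon>) + ennreal a * indicator B xs"
    proof (cases "xs \<in> B")
      case True
      have "f xs \<le> ennreal (c + a)" using f[OF xs] by blast
      also have "\<dots> \<le> ennreal (c + a * \<epsilon> + a)" using a eps by (intro ennreal_leI) auto
      also have "\<dots> = ennreal (c + a * \<epsilon>) + ennreal a * indicator B xs"
        using True a c eps by (simp add: ennreal_plus[symmetric] del: ennreal_plus)
      finally show ?thesis .
    next
      case False
      thus ?thesis using f[OF xs] xs by (auto simp: B_def intro: add_increasing2)
    qed
  qed
  also have "\<dots> = ennreal (c + a * \<epsilon>) + ennreal a * emeasure ?P B"
    using B_sets
    by (subst nn_integral_add) (auto simp: PS.emeasure_space_1 nn_integral_cmult_indicator)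
  also have "\<dots> \<le> ennreal (c + a * \<epsilon>) + ennreal a * ennreal (2 * real (card SS) * exp (-2 * real n * \<epsilon>\<^sup>2))"
    unfolding B_def by (intro add_left_mono mult_left_mono emeasure_some_deviation[OF M n fin SS eps]) auto
  also have "\<dots> = ennreal (c + a * (\<epsilon> + 2 * real (card SS) * exp (-2 * real n * \<epsilon>\<^sup>2)))"
    using a c eps
    by (simp add: ennreal_mult[symmetric] ennreal_plus[symmetric] algebra_simps del: ennreal_plus)
  finally show ?thesis .
qed

definition bins :: "nat \<Rightarrow> ('r::finite \<Rightarrow> nat) set" where
  "bins N = PiE UNIV (\<lambda>_. {..<N})"

definition binset :: "nat \<Rightarrow> ('r::finite \<Rightarrow> nat) \<Rightarrow> (real^'r) set" where
  "binset N j = {x \<in> unit_cube. bin_idx N x = j}"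

definition binint :: "nat \<Rightarrow> nat \<Rightarrow> real set" where
  "binint N a = (if a = N - 1 then {real a / N .. 1} else {real a / N ..< (real a + 1) / N})"

lemma bin_idx_coord_iff:
  assumes N: "N > 0" and a: "a < N"
  shows "(0 \<le> y \<and> y \<le> 1 \<and> min (N - 1) (nat \<lfloor>real N * y\<rfloor>) = a) \<longleftrightarrow> y \<in> binint N a"
proof (cases "a = N - 1")
  case True
  have "(0 \<le> y \<and> y \<le> 1 \<and> min (N - 1) (nat \<lfloor>real N * y\<rfloor>) = a) \<longleftrightarrow> (0 \<le> y \<and> y \<le> 1 \<and> nat \<lfloor>real N * y\<rfloor> \<ge> N - 1)"
    using True by auto
  also have "\<dots> \<longleftrightarrow> (0 \<le> y \<and> y \<le> 1 \<and> \<lfloor>real N * y\<rfloor> \<ge> int (N - 1))"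
    using N by (auto simp: le_nat_iff of_nat_diff)
  also have "\<dots> \<longleftrightarrow> (0 \<le> y \<and> y \<le> 1 \<and> real N * y \<ge> real (N - 1))"
    by (simp add: le_floor_iff)
  also have "\<dots> \<longleftrightarrow> y \<in> binint N a"
  proof -
    have ny: "0 \<le> y" if "real (N - 1) \<le> real N * y"
    proof -
      have "0 \<le> real N * y" using that by (smt (verit) of_nat_0_le_iff)
      thus ?thesis using N by (simp add: zero_le_mult_iff)
    qed
    have "real (N - 1) \<le> real N * y \<longleftrightarrow> real (N-1) / N \<le> y"
      using N by (simp add: field_simps)
    thus ?thesis using True N ny by (auto simp: binint_def)
  qed
  finally show ?thesis .
next
  case False
  hence a': "a < N - 1" using a by auto
  have "(0 \<le> y \<and> y \<le> 1 \<and> min (N - 1) (nat \<lfloor>real N * y\<rfloor>) = a) \<longleftrightarrow> (0 \<le> y \<and> y \<le> 1 \<and> \<lfloor>real N * y\<rfloor> = int a)"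
    using a' by (auto simp: min_def split: if_splits) 
  also have "\<dots> \<longleftrightarrow> (0 \<le> y \<and> y \<le> 1 \<and> real a \<le> real N * y \<and> real N * y < real a + 1)"
    by (simp add: floor_eq_iff)
  also have "\<dots> \<longleftrightarrow> y \<in> binint N a"
  proof -
    have e1: "real a \<le> real N * y \<longleftrightarrow> real a / N \<le> y" using N by (simp add: field_simps)
    have e2: "real N * y < real a + 1 \<longleftrightarrow> y < (real a + 1) / N" using N by (simp add: field_simps)
    have h1: "0 \<le> real a / N" by simp
    have h2: "(real a + 1) / N \<le> 1" using a N by (simp add: field_simps)
    show ?thesis unfolding e1 e2 binint_def using False h1 h2 by (smt (verit) atLeastLessThan_iff)
  qed
  finally show ?thesis .
qed

lemma binset_eq:
  assumes N: "N > 0" and j: "j \<in> bins N"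
  shows "binset N j = {x. \<forall>i. x $ i \<in> binint N (j i)}"
proof -
  have ji: "j i < N" for i using j by (auto simp: bins_def)
  have "x \<in> binset N j \<longleftrightarrow> (\<forall>i. 0 \<le> x $ i \<and> x $ i \<le> 1 \<and> min (N - 1) (nat \<lfloor>real N * x $ i\<rfloor>) = j i)" for x
    by (auto simp: binset_def unit_cube_def bin_idx_def fun_eq_iff)
  thus ?thesis using bin_idx_coord_iff[OF N ji] by auto
qed

lemma bin_idx_bins: "N > 0 \<Longrightarrow> x \<in> unit_cube \<Longrightarrow> bin_idx N x \<in> bins N"
  by (auto simp: bins_def bin_idx_def)

lemma finite_bins: "finite (bins N)"
  by (auto simp: bins_def intro!: finite_PiE)

lemma card_bins: "card (bins N :: ('r::finite \<Rightarrow> nat) set) = N ^ CARD('r)"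
  by (simp add: bins_def card_PiE)

lemma cube_Union: "N > 0 \<Longrightarrow> unit_cube = (\<Union>j\<in>bins N. binset N j)"
  by (auto simp: binset_def bin_idx_bins)

lemma binset_cube: "binset N j \<subseteq> unit_cube"
  by (auto simp: binset_def)

lemma binint_sets[measurable]: "binint N a \<in> sets borel"
  by (simp add: binint_def)

lemma binset_sets[measurable]:
  fixes j :: "'r::finite \<Rightarrow> nat"
  assumes N: "N > 0"
  shows "binset N j \<in> sets borel"
proof (cases "j \<in> bins N")
  case True
  have "{x::real^'r. \<forall>i. x $ i \<in> binint N (j i)} \<in> sets borel" by measurable
  thus ?thesis using binset_eq[OF N True] by simp
next
  case False
  hence "binset N j = {}" using bin_idx_bins[OF N] by (auto simp: binset_def)
  thus ?thesis by simp
qed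

lemma vle_sets[measurable]: "{x::real^'r::finite. vle x t} \<in> sets borel"
proof -
  have "{x::real^'r. vle x t} = {x. \<forall>i. x $ i \<le> t $ i}" by (simp add: vle_def)
  also have "\<dots> \<in> sets borel" by measurable
  finally show ?thesis .
qed

lemma binset_coord:
  assumes N: "N > 0" and x: "x \<in> binset N j"
  shows "real (j i) / N \<le> x $ i" "x $ i \<le> (real (j i) + 1) / N" "j i < N"
    "j i \<noteq> N - 1 \<Longrightarrow> x $ i < (real (j i) + 1) / N"
proof -
  have jb: "j \<in> bins N" using x bin_idx_bins[OF N] by (auto simp: binset_def)
  thus "j i < N" by (auto simp: bins_def)
  have xi: "x $ i \<in> binint N (j i)" using binset_eq[OF N jb] x by auto
  have "real (j i) + 1 \<le> real N" using \<open>j i < N\<close> by linarith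
  hence "1 \<le> (real (j i) + 1) / N" if "j i = N - 1" using that N by (simp add: field_simps of_nat_diff)
  thus "real (j i) / N \<le> x $ i" "x $ i \<le> (real (j i) + 1) / N"
       "j i \<noteq> N - 1 \<Longrightarrow> x $ i < (real (j i) + 1) / N"
    using xi by (auto simp: binint_def split: if_splits)
qed

lemma mem_binset_iff: "N > 0 \<Longrightarrow> x \<in> unit_cube \<Longrightarrow> x \<in> binset N j \<longleftrightarrow> j = bin_idx N x"
  by (auto simp: binset_def)

lemma bin_corner_in_binset:
  fixes j :: "'r::finite \<Rightarrow> nat"
  assumes N: "N > 0" and j: "j \<in> bins N"
  shows "(\<chi> i. real (j i) / N) \<in> binset N j"
proof -
  have "real (j i) / N \<in> binint N (j i)" for i
  proof -
    have "j i < N" using j by (auto simp: bins_def)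
    hence "real (j i) + 1 \<le> real N" by linarith
    hence "real (j i) / N \<le> 1" "real (j i) / N < (real (j i) + 1) / N" using N
      by (simp_all add: field_simps)
    thus ?thesis by (auto simp: binint_def)
  qed
  thus ?thesis using binset_eq[OF N j] by auto
qed

lemma emeasure_cbox_cart:
  fixes a b :: "real^'r::finite"
  assumes "\<And>i. a $ i \<le> b $ i"
  shows "emeasure lborel (cbox a b) = ennreal (\<Prod>i\<in>UNIV. b $ i - a $ i)"
    "emeasure lborel (box a b) = ennreal (\<Prod>i\<in>UNIV. b $ i - a $ i)"
proof -
  have ne: "cbox a b \<noteq> {}" using assms by (auto simp: interval_eq_empty_cart not_less)
  have "emeasure lborel (cbox a b) = ennreal (measure lborel (cbox a b))"
    using emeasure_lborel_cbox_finite[of a b] by (simp add: emeasure_eq_ennreal_measure)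
  thus c: "emeasure lborel (cbox a b) = ennreal (\<Prod>i\<in>UNIV. b $ i - a $ i)"
    using Henstock_Kurzweil_Integration.content_cbox_cart[OF ne] by simp
  have "emeasure lborel (box a b) = emeasure lborel (cbox a b)"
    by (simp only: emeasure_lborel_box_eq emeasure_lborel_cbox_eq)
  thus "emeasure lborel (box a b) = ennreal (\<Prod>i\<in>UNIV. b $ i - a $ i)" using c by simp
qed

lemma unit_cube_cbox: "unit_cube = cbox (0::real^'r::finite) (\<chi> i. 1)"
  by (auto simp: unit_cube_def mem_box_cart)

lemma unit_cube_sets[measurable]: "unit_cube \<in> sets borel"
  by (simp add: unit_cube_cbox)

lemma emeasure_unit_cube: "emeasure lborel (unit_cube :: (real^'r::finite) set) = 1"
  unfolding unit_cube_cbox by (subst emeasure_cbox_cart) auto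

lemma emeasure_binset:
  fixes j :: "'r::finite \<Rightarrow> nat"
  assumes N: "N > 0" and j: "j \<in> bins N"
  shows "emeasure lborel (binset N j) = ennreal ((1 / real N) ^ CARD('r))"
proof -
  define lo :: "real^'r" where "lo = (\<chi> i. real (j i) / N)"
  define hi :: "real^'r" where "hi = (\<chi> i. (real (j i) + 1) / N)"
  have le: "lo $ i \<le> hi $ i" for i using N by (simp add: lo_def hi_def divide_right_mono)
  have pr: "(\<Prod>i\<in>UNIV. hi $ i - lo $ i) = (1 / real N) ^ CARD('r)"
    by (simp add: lo_def hi_def diff_divide_distrib[symmetric])
  have sub1: "binset N j \<subseteq> cbox lo hi"
    using binset_coord[OF N] by (auto simp: mem_box_cart lo_def hi_def)
  have sub2: "box lo hi \<subseteq> binset N j"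
  proof
    fix x assume x: "x \<in> box lo hi"
    have "x $ i \<in> binint N (j i)" for i
    proof -
      have ji: "j i < N" using j by (auto simp: bins_def)
      have "real (j i) + 1 \<le> real N" using ji by linarith
      hence "(real (j i) + 1) / N \<le> 1" using N by (simp add: field_simps)
      thus ?thesis using x[unfolded mem_box_cart, rule_format, of i]
        by (auto simp: binint_def lo_def hi_def)
    qed
    thus "x \<in> binset N j" using binset_eq[OF N j] by auto
  qed
  have "emeasure lborel (binset N j) \<le> ennreal ((1 / real N) ^ CARD('r))"
    using emeasure_mono[OF sub1, of lborel] emeasure_cbox_cart(1)[OF le] pr by simp
  moreover have "emeasure lborel (binset N j) \<ge> ennreal ((1 / real N) ^ CARD('r))"
    using emeasure_mono[OF sub2, of lborel] emeasure_cbox_cart(2)[OF le] pr binset_sets[OF N, of j] by simp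
  ultimately show ?thesis by (rule antisym)
qed

lemma emeasure_bin_slice_finite: "N > 0 \<Longrightarrow> emeasure lborel (A \<inter> binset N j) \<noteq> top"
proof -
  assume N: "N > 0"
  have "emeasure lborel (A \<inter> binset N j) \<le> emeasure lborel (unit_cube :: (real^'a) set)"
    by (intro emeasure_mono) (auto simp: binset_def)
  thus ?thesis by (simp add: emeasure_unit_cube top.not_eq_extremum order.strict_trans1)
qed

lemma measure_bin_slice_le:
  fixes j :: "'r::finite \<Rightarrow> nat"
  assumes N: "N > 0" and j: "j \<in> bins N" and A: "A \<in> sets borel"
  shows "measure lborel (A \<inter> binset N j) \<le> (1 / real N) ^ CARD('r)"
proof -
  have "measure lborel (A \<inter> binset N j) \<le> measure lborel (binset N j)"
    using A binset_sets[OF N, of j]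
    by (intro measure_mono_fmeasurable) (auto simp: fmeasurable_def emeasure_binset[OF N j])
  thus ?thesis using emeasure_binset[OF N j] by (simp add: measure_def)
qed

lemma scaled_measure_bin_slice_le:
  fixes j :: "'r::finite \<Rightarrow> nat"
  assumes N: "N > 0" and j: "j \<in> bins N" and A: "A \<in> sets borel"
  shows "real N ^ CARD('r) * measure lborel (A \<inter> binset N j) \<le> 1"
proof -
  have "real N ^ CARD('r) * measure lborel (A \<inter> binset N j) \<le> real N ^ CARD('r) * (1 / real N) ^ CARD('r)"
    using measure_bin_slice_le[OF N j A] by (intro mult_left_mono) auto
  also have "\<dots> = 1" using N by (simp add: power_one_over)
  finally show ?thesis .
qed

lemma sum_measure_bin_slices:
  fixes S :: "(real^'r::finite) set"
  assumes N: "N > 0" and S: "S \<in> sets borel"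
  shows "(\<Sum>j\<in>bins N. measure lborel (S \<inter> binset N j)) = measure lborel (S \<inter> unit_cube)"
proof -
  have "S \<inter> unit_cube = (\<Union>j\<in>bins N. S \<inter> binset N j)" using cube_Union[OF N] by auto
  moreover have "measure lborel (\<Union>j\<in>bins N. S \<inter> binset N j) = (\<Sum>j\<in>bins N. measure lborel (S \<inter> binset N j))"
  proof (intro measure_finite_Union finite_bins)
    show "disjoint_family_on (\<lambda>j. S \<inter> binset N j) (bins N)"
      by (auto simp: disjoint_family_on_def binset_def)
    show "(\<lambda>j. S \<inter> binset N j) ` bins N \<subseteq> sets lborel" using S binset_sets[OF N] by auto
    show "emeasure lborel (S \<inter> binset N j) \<noteq> \<infinity>" for j using emeasure_bin_slice_finite[OF N, of S j] by simp
  qed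
  ultimately show ?thesis by simp
qed

lemma measure_slab_cube:
  fixes i :: "'r::finite"
  assumes "0 \<le> a" "a \<le> b" "b \<le> 1"
  shows "measure lborel ({x::real^'r. a < x $ i \<and> x $ i \<le> b} \<inter> unit_cube) \<le> b - a"
proof -
  define lo :: "real^'r" where "lo = (\<chi> l. if l = i then a else 0)"
  define hi :: "real^'r" where "hi = (\<chi> l. if l = i then b else 1)"
  have le: "lo $ l \<le> hi $ l" for l using assms by (simp add: lo_def hi_def)
  have sub: "{x::real^'r. a < x $ i \<and> x $ i \<le> b} \<inter> unit_cube \<subseteq> cbox lo hi"
    by (auto simp: mem_box_cart lo_def hi_def unit_cube_def)
  have pr: "(\<Prod>l\<in>UNIV. hi $ l - lo $ l) = b - a"
    by (simp add: lo_def hi_def if_distrib prod.delta cong: if_cong)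
  have "emeasure lborel ({x::real^'r. a < x $ i \<and> x $ i \<le> b} \<inter> unit_cube) \<le> emeasure lborel (cbox lo hi)"
    by (rule emeasure_mono[OF sub]) simp
  also have "\<dots> = ennreal (b - a)" using emeasure_cbox_cart(1)[OF le] pr by simp
  finally show ?thesis using assms by (simp add: measure_def enn2real_leI)
qed

text \<open>For a point \<open>t\<close> of the cube, a bin sharing no coordinate index with the bin of \<open>t\<close> lies
  either entirely below \<open>t\<close> (componentwise) or entirely outside \<open>{x. x \<le> t}\<close>; only the bins
  sharing a coordinate index with \<open>t\<close>'s bin are cut by the orthant, and there are at most
  \<open>r N^(r-1)\<close> of them.\<close>
lemma vle_on_bin_sharing_no_coord:
  fixes t :: "real^'r::finite"
  assumes N: "N > 0" and t: "t \<in> unit_cube" and x: "x \<in> binset N j"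
    and np: "\<forall>i. j i \<noteq> bin_idx N t i"
  shows "vle x t \<longleftrightarrow> (\<forall>i. j i < bin_idx N t i)"
proof -
  have tB: "t \<in> binset N (bin_idx N t)" using t by (simp add: binset_def)
  have "x $ i \<le> t $ i \<longleftrightarrow> j i < bin_idx N t i" for i
  proof (cases "j i < bin_idx N t i")
    case True
    have "bin_idx N t i < N" using binset_coord(3)[OF N tB] .
    hence "j i \<noteq> N - 1" using True by linarith
    hence "x $ i < (real (j i) + 1) / N" using binset_coord(4)[OF N x] by auto
    also have "\<dots> \<le> real (bin_idx N t i) / N" using True N by (simp add: divide_right_mono)
    also have "\<dots> \<le> t $ i" using binset_coord(1)[OF N tB] .
    finally show ?thesis using True by simp
  next
    case False
    hence gt: "bin_idx N t i < j i" using np by (meson linorder_neqE_nat)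
    have "j i < N" using binset_coord(3)[OF N x] .
    hence "bin_idx N t i \<noteq> N - 1" using gt by linarith
    hence "t $ i < (real (bin_idx N t i) + 1) / N" using binset_coord(4)[OF N tB] by auto
    also have "\<dots> \<le> real (j i) / N" using gt N by (simp add: divide_right_mono)
    also have "\<dots> \<le> x $ i" using binset_coord(1)[OF N x] .
    finally show ?thesis using False by simp
  qed
  thus ?thesis by (simp add: vle_def)
qed

lemma card_bins_slice:
  fixes i :: "'r::finite"
  assumes a: "a < N"
  shows "card {j \<in> bins N. j i = a} = N ^ (CARD('r) - 1)"
proof -
  have "{j \<in> bins N. j i = a} = PiE UNIV (\<lambda>l. if l = i then {a} else {..<N})"
    using a by (auto simp: bins_def PiE_def Pi_def split: if_splits)
  hence "card {j \<in> bins N. j i = a} = (\<Prod>l\<in>UNIV. card (if l = i then {a} else {..<N}))"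
    by (simp add: card_PiE)
  also have "\<dots> = (\<Prod>l\<in>UNIV - {i}. N)"
    by (subst prod.remove[of UNIV i]) (auto intro!: prod.cong)
  also have "\<dots> = N ^ (CARD('r) - 1)" by (simp add: card_Diff_singleton)
  finally show ?thesis .
qed

lemma card_bins_sharing_coord:
  fixes \<tau> :: "'r::finite \<Rightarrow> nat"
  assumes \<tau>: "\<tau> \<in> bins N"
  shows "card {j \<in> bins N. \<exists>i. j i = \<tau> i} \<le> CARD('r) * N ^ (CARD('r) - 1)"
proof -
  have "{j \<in> bins N. \<exists>i. j i = \<tau> i} = (\<Union>i. {j \<in> bins N. j i = \<tau> i})" by auto
  hence "card {j \<in> bins N. \<exists>i. j i = \<tau> i} \<le> (\<Sum>i\<in>UNIV. card {j \<in> bins N. j i = \<tau> i})"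
    by (simp add: card_UN_le)
  also have "\<dots> = (\<Sum>i\<in>(UNIV::'r set). N ^ (CARD('r) - 1))"
    using \<tau> by (intro sum.cong refl card_bins_slice) (auto simp: bins_def)
  finally show ?thesis by simp
qed

definition bin_count :: "nat \<Rightarrow> nat \<Rightarrow> (nat \<Rightarrow> real^'r::finite) \<Rightarrow> ('r \<Rightarrow> nat) \<Rightarrow> nat" where
  "bin_count N n xs j = card {i\<in>{..<n}. xs i \<in> binset N j}"

lemma bin_count_le: "bin_count N n xs j \<le> n"
proof -
  have "bin_count N n xs j \<le> card {..<n}" unfolding bin_count_def by (intro card_mono) auto
  thus ?thesis by simp
qed

lemma bin_count_sum:
  assumes "finite J"
  shows "(\<Sum>j\<in>J. bin_count N n xs j) = card {i\<in>{..<n}. xs i \<in> (\<Union>j\<in>J. binset N j)}"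
proof -
  have "{i\<in>{..<n}. xs i \<in> (\<Union>j\<in>J. binset N j)} = (\<Union>j\<in>J. {i\<in>{..<n}. xs i \<in> binset N j})" by auto
  moreover have "card (\<Union>j\<in>J. {i\<in>{..<n}. xs i \<in> binset N j}) = (\<Sum>j\<in>J. card {i\<in>{..<n}. xs i \<in> binset N j})"
    using assms by (intro card_UN_disjoint) (auto simp: binset_def)
  ultimately show ?thesis by (simp add: bin_count_def)
qed

lemma bin_count_sum_all:
  assumes N: "N > 0" and xs: "\<forall>i<n. xs i \<in> unit_cube"
  shows "(\<Sum>j\<in>bins N. bin_count N n xs j) = n"
proof -
  have "{i\<in>{..<n}. xs i \<in> (\<Union>j\<in>bins N. binset N j)} = {..<n}"
    using xs cube_Union[OF N] by auto
  thus ?thesis using bin_count_sum[OF finite_bins, of N n xs] by simp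
qed

lemma emeasure_piecewise_density:
  fixes c :: "('r::finite \<Rightarrow> nat) \<Rightarrow> real"
  assumes N: "N > 0" and c: "\<And>j. c j \<ge> 0" and A[measurable]: "A \<in> sets borel"
  shows "emeasure (density lborel (\<lambda>x. ennreal (\<Sum>j\<in>bins N. indicator (binset N j) x * c j))) A
       = ennreal (\<Sum>j\<in>bins N. c j * measure lborel (A \<inter> binset N j))"
proof -
  have [measurable]: "binset N j \<in> sets borel" for j :: "'r \<Rightarrow> nat" using binset_sets[OF N] .
  have "emeasure (density lborel (\<lambda>x. ennreal (\<Sum>j\<in>bins N. indicator (binset N j) x * c j))) A
      = (\<integral>\<^sup>+ x. ennreal (\<Sum>j\<in>bins N. indicator (binset N j) x * c j) * indicator A x \<partial>lborel)"
    by (rule emeasure_density) auto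
  also have "\<dots> = (\<integral>\<^sup>+ x. (\<Sum>j\<in>bins N. ennreal (c j) * indicator (A \<inter> binset N j) x) \<partial>lborel)"
  proof (intro nn_integral_cong)
    fix x
    have "(\<Sum>j\<in>bins N. indicator (binset N j) x * c j) * indicator A x
        = (\<Sum>j\<in>bins N. c j * indicator (A \<inter> binset N j) x)"
      by (auto simp: sum_distrib_right indicator_def intro!: sum.cong)
    hence "ennreal (\<Sum>j\<in>bins N. indicator (binset N j) x * c j) * indicator A x
        = ennreal (\<Sum>j\<in>bins N. c j * indicator (A \<inter> binset N j) x)"
      by (auto simp: indicator_def)
    also have "\<dots> = (\<Sum>j\<in>bins N. ennreal (c j * indicator (A \<inter> binset N j) x))"
      using c by (subst sum_ennreal) auto
    also have "\<dots> = (\<Sum>j\<in>bins N. ennreal (c j) * indicator (A \<inter> binset N j) x)"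
      using c by (intro sum.cong refl) (auto simp: indicator_def)
    finally show "ennreal (\<Sum>j\<in>bins N. indicator (binset N j) x * c j) * indicator A x
        = (\<Sum>j\<in>bins N. ennreal (c j) * indicator (A \<inter> binset N j) x)" .
  qed
  also have "\<dots> = (\<Sum>j\<in>bins N. ennreal (c j) * emeasure lborel (A \<inter> binset N j))"
    by (subst nn_integral_sum) (auto simp: nn_integral_cmult_indicator)
  also have "\<dots> = (\<Sum>j\<in>bins N. ennreal (c j * measure lborel (A \<inter> binset N j)))"
    using c
    by (intro sum.cong refl) (simp add: emeasure_eq_ennreal_measure[OF emeasure_bin_slice_finite[OF N]] ennreal_mult)
  also have "\<dots> = ennreal (\<Sum>j\<in>bins N. c j * measure lborel (A \<inter> binset N j))"
    using c by (subst sum_ennreal) auto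
  finally show ?thesis .
qed

lemma priv_density_piecewise:
  fixes xs :: "nat \<Rightarrow> real^'r::finite"
  assumes N: "N > 0"
  shows "priv_density N n \<delta> xs x = (\<Sum>j\<in>bins N. indicator (binset N j) x *
            ((1 - \<delta>) * (real (bin_count N n xs j) / real n * real N ^ CARD('r)) + \<delta>))"
proof (cases "x \<in> unit_cube")
  case True
  let ?j = "bin_idx N x"
  have jb: "?j \<in> bins N" using bin_idx_bins[OF N True] .
  have "(\<Sum>j\<in>bins N. indicator (binset N j) x *
            ((1 - \<delta>) * (real (bin_count N n xs j) / real n * real N ^ CARD('r)) + \<delta>))
      = indicator (binset N ?j) x * ((1 - \<delta>) * (real (bin_count N n xs ?j) / real n * real N ^ CARD('r)) + \<delta>)"
    by (rule sum.remove[OF finite_bins jb, THEN trans])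
       (auto simp: mem_binset_iff[OF N True] intro!: sum.neutral)
  also have "\<dots> = (1 - \<delta>) * (real (bin_count N n xs ?j) / real n * real N ^ CARD('r)) + \<delta>"
    by (simp add: mem_binset_iff[OF N True])
  also have "bin_count N n xs ?j = card {i \<in> {..<n}. xs i \<in> unit_cube \<and> bin_idx N (xs i) = bin_idx N x}"
    unfolding bin_count_def binset_def by (rule arg_cong[where f=card]) auto
  finally show ?thesis using True by (simp add: priv_density_def hist_def)
next
  case False
  hence "x \<notin> binset N j" for j using binset_cube by blast
  thus ?thesis using False by (simp add: priv_density_def)
qed

text \<open>A Lipschitz function oscillates by at most \<open>L r / N\<close> on a bin (the bin has \<open>\<ell>\<^sub>1\<close>-diameter \<open>r/N\<close>).\<close>
lemma lipschitz_oscillation_on_bin: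
  fixes p :: "real^'r::finite \<Rightarrow> real"
  assumes N: "N > 0" and p_lip: "\<forall>x\<in>unit_cube. \<forall>y\<in>unit_cube. \<bar>p x - p y\<bar> \<le> L * norm (x - y)"
    and L: "L \<ge> 0" and x: "x \<in> binset N j" and y: "y \<in> binset N j"
  shows "\<bar>p x - p y\<bar> \<le> L * real CARD('r) / N"
proof -
  have "\<bar>(x - y) $ i\<bar> \<le> 1 / N" for i
    using binset_coord[OF N x, of i] binset_coord[OF N y, of i]
    by (simp add: abs_le_iff add_divide_distrib)
  hence "norm (x - y) \<le> (\<Sum>i\<in>(UNIV::'r set). 1 / N)"
    using norm_le_l1_cart[of "x - y"] by (meson order_trans sum_mono)
  hence "norm (x - y) \<le> real CARD('r) / N" by simp
  moreover have "x \<in> unit_cube" "y \<in> unit_cube" using x y binset_cube by auto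
  ultimately show ?thesis using p_lip L
    by (smt (verit, best) mult_left_mono times_divide_eq_right)
qed

text \<open>The arithmetic of the bias bound: \<open>r N^(r-1)\<close> boundary bins, each contributing at most
  \<open>2 (L r / N) N^-r\<close>.\<close>
lemma boundary_bias_total:
  fixes r N :: nat and L :: real
  assumes N: "N > 0" and r: "r \<ge> 1"
  shows "real (r * N ^ (r - 1)) * (2 * (L * real r / real N) * (1 / real N) ^ r)
       = 2 * L * real r ^ 2 / real N ^ 2"
proof -
  obtain s where s: "r = Suc s" using r by (cases r) auto
  show ?thesis using N unfolding s by (simp add: field_simps power2_eq_square)
qed

locale cube_density =
  fixes p :: "real^'r::finite \<Rightarrow> real"
  assumes p_meas[measurable]: "p \<in> borel_measurable borel"
    and p_nonneg: "\<forall>x\<in>unit_cube. 0 \<le> p x"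
    and P_prob: "prob_space (density lborel (\<lambda>x. ennreal (indicator unit_cube x * p x)))"
begin

abbreviation P :: "(real^'r) measure" where
  "P \<equiv> density lborel (\<lambda>x. ennreal (indicator unit_cube x * p x))"

lemma measure_near_point:
  assumes S[measurable]: "S \<in> sets borel" and Sc: "S \<subseteq> unit_cube" and y: "y \<in> unit_cube"
    and om: "\<And>x. x \<in> S \<Longrightarrow> \<bar>p x - p y\<bar> \<le> \<omega>" and om0: "\<omega> \<ge> 0"
  shows "measure P S \<le> (p y + \<omega>) * measure lborel S"
    "(p y - \<omega>) * measure lborel S \<le> measure P S"
proof -
  have Sfin: "emeasure lborel S \<noteq> top"
  proof -
    have "emeasure lborel S \<le> emeasure lborel (unit_cube :: (real^'r) set)"
      using Sc by (intro emeasure_mono) auto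
    thus ?thesis using emeasure_unit_cube[where 'r='r] by (metis ennreal_one_neq_top top_unique)
  qed
  have lamS: "emeasure lborel S = ennreal (measure lborel S)" using Sfin by (simp add: emeasure_eq_ennreal_measure)
  have omp: "0 \<le> p y + \<omega>" using om0 y p_nonneg by auto
  have "emeasure P S = (\<integral>\<^sup>+ x. ennreal (indicator unit_cube x * p x) * indicator S x \<partial>lborel)"
    by (rule emeasure_density) auto
  also have "\<dots> \<le> (\<integral>\<^sup>+ x. ennreal (p y + \<omega>) * indicator S x \<partial>lborel)"
  proof (intro nn_integral_mono)
    fix x show "ennreal (indicator unit_cube x * p x) * indicator S x \<le> ennreal (p y + \<omega>) * indicator S x"
    proof (cases "x \<in> S")
      case True
      hence "p x \<le> p y + \<omega>" using om[OF True] by auto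
      thus ?thesis using True Sc by (auto simp: indicator_def intro: ennreal_leI)
    qed auto
  qed
  also have "\<dots> = ennreal ((p y + \<omega>) * measure lborel S)"
    using omp by (simp add: nn_integral_cmult_indicator lamS ennreal_mult)
  finally have up: "emeasure P S \<le> ennreal ((p y + \<omega>) * measure lborel S)" .
  hence Pfin: "emeasure P S \<noteq> top" by (auto simp: top_unique)
  have PS: "emeasure P S = ennreal (measure P S)" using Pfin by (simp add: emeasure_eq_ennreal_measure)
  show "measure P S \<le> (p y + \<omega>) * measure lborel S"
    using up omp unfolding PS by (simp add: ennreal_le_iff)
  show "(p y - \<omega>) * measure lborel S \<le> measure P S"
  proof (cases "p y - \<omega> \<le> 0")
    case True
    hence "(p y - \<omega>) * measure lborel S \<le> 0" by (simp add: mult_nonpos_nonneg)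
    thus ?thesis by (smt (verit) measure_nonneg)
  next
    case False
    have "ennreal ((p y - \<omega>) * measure lborel S) = (\<integral>\<^sup>+ x. ennreal (p y - \<omega>) * indicator S x \<partial>lborel)"
      using False by (simp add: nn_integral_cmult_indicator lamS ennreal_mult)
    also have "\<dots> \<le> (\<integral>\<^sup>+ x. ennreal (indicator unit_cube x * p x) * indicator S x \<partial>lborel)"
    proof (intro nn_integral_mono)
      fix x show "ennreal (p y - \<omega>) * indicator S x \<le> ennreal (indicator unit_cube x * p x) * indicator S x"
      proof (cases "x \<in> S")
        case True
        hence "p y - \<omega> \<le> p x" using om[OF True] by auto
        thus ?thesis using True Sc by (auto simp: indicator_def intro: ennreal_leI)
      qed auto
    qed
    also have "\<dots> = emeasure P S" by (rule emeasure_density[symmetric]) auto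
    finally show ?thesis unfolding PS using False by (simp add: ennreal_le_iff)
  qed
qed

lemma measure_bin_decomposition:
  assumes N: "N > 0" and A[measurable]: "A \<in> sets borel"
  shows "measure P A = (\<Sum>j\<in>bins N. measure P (A \<inter> binset N j))"
proof -
  interpret PP: prob_space P by (rule P_prob)
  have [measurable]: "binset N j \<in> sets borel" for j :: "'r \<Rightarrow> nat" using binset_sets[OF N] .
  have ae: "AE x in P. x \<in> unit_cube"
    by (subst AE_density) (auto simp: indicator_def)
  have "measure P A = measure P (A \<inter> unit_cube)"
    by (rule measure_eq_AE) (use ae in auto)
  also have "A \<inter> unit_cube = (\<Union>j\<in>bins N. A \<inter> binset N j)"
    using cube_Union[OF N] by auto
  also have "measure P \<dots> = (\<Sum>j\<in>bins N. measure P (A \<inter> binset N j))"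
  proof -
    have "disjoint_family_on (\<lambda>j. A \<inter> binset N j) (bins N)"
      by (auto simp: disjoint_family_on_def binset_def)
    thus ?thesis by (intro measure_finite_Union finite_bins) (auto simp: PP.emeasure_finite)
  qed
  finally show ?thesis .
qed

text \<open>Off the boundary of the orthant \<open>{x. x \<le> t}\<close> the histogram approximation is exact: a
  bin sharing no coordinate index with the bin of \<open>t\<close> lies entirely inside or entirely
  outside the orthant.\<close>
lemma bin_bias_off_boundary:
  assumes N: "N > 0" and t: "t \<in> unit_cube" and j: "j \<in> bins N"
    and off: "\<forall>i. j i \<noteq> bin_idx N t i"
  shows "measure P ({x. vle x t} \<inter> binset N j)
       = measure P (binset N j) * real N ^ CARD('r) * measure lborel ({x. vle x t} \<inter> binset N j)"
proof (cases "\<forall>i. j i < bin_idx N t i")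
  case True
  hence "{x. vle x t} \<inter> binset N j = binset N j"
    using vle_on_bin_sharing_no_coord[OF N t _ off] by auto
  thus ?thesis using emeasure_binset[OF N j] N by (simp add: measure_def power_one_over)
next
  case False
  hence "{x. vle x t} \<inter> binset N j = {}"
    using vle_on_bin_sharing_no_coord[OF N t _ off] by auto
  thus ?thesis by simp
qed
end

locale lipschitz_cube_density = cube_density p for p :: "real^'r::finite \<Rightarrow> real" +
  fixes L :: real
  assumes L_nonneg: "L \<ge> 0"
    and p_lip: "\<forall>x\<in>unit_cube. \<forall>y\<in>unit_cube. \<bar>p x - p y\<bar> \<le> L * norm (x - y)"
begin

lemma bin_bias:
  assumes N: "N > 0" and j: "j \<in> bins N"
    and S[measurable]: "S \<in> sets borel" and SB: "S \<subseteq> binset N j"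
  shows "\<bar>measure P S - measure P (binset N j) * real N ^ CARD('r) * measure lborel S\<bar>
       \<le> 2 * (L * real CARD('r) / N) * measure lborel S"
proof -
  define \<omega> where "\<omega> = L * real CARD('r) / N"
  define y :: "real^'r" where "y = (\<chi> i. real (j i) / N)"
  have yB: "y \<in> binset N j" unfolding y_def by (rule bin_corner_in_binset[OF N j])
  have yc: "y \<in> unit_cube" using yB binset_cube by auto
  have om0: "\<omega> \<ge> 0" using L_nonneg N by (simp add: \<omega>_def)
  have omB: "\<bar>p x - p y\<bar> \<le> \<omega>" if "x \<in> binset N j" for x
    unfolding \<omega>_def by (rule lipschitz_oscillation_on_bin[OF N p_lip L_nonneg that yB])
  have Bm: "binset N j \<in> sets borel" using binset_sets[OF N] .
  have lamB: "measure lborel (binset N j) = (1 / real N) ^ CARD('r)"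
    using emeasure_binset[OF N j] by (simp add: measure_def)
  have Nr: "real N ^ CARD('r) * (1 / real N) ^ CARD('r) = 1" using N
    by (simp add: power_one_over)
  have b1: "measure P (binset N j) \<le> (p y + \<omega>) * (1 / real N) ^ CARD('r)"
    using measure_near_point(1)[OF Bm binset_cube yc omB om0] lamB by simp
  have b2: "(p y - \<omega>) * (1 / real N) ^ CARD('r) \<le> measure P (binset N j)"
    using measure_near_point(2)[OF Bm binset_cube yc omB om0] lamB by simp
  have Np: "real N ^ CARD('r) > 0" using N by simp
  have a1: "measure P (binset N j) * real N ^ CARD('r) \<le> p y + \<omega>"
    using mult_right_mono[OF b1, of "real N ^ CARD('r)"] Np Nr by (simp add: mult_ac)
  have a2: "p y - \<omega> \<le> measure P (binset N j) * real N ^ CARD('r)"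
    using mult_right_mono[OF b2, of "real N ^ CARD('r)"] Np Nr by (simp add: mult_ac)
  have Sc: "S \<subseteq> unit_cube" using SB binset_cube by auto
  have s1: "measure P S \<le> (p y + \<omega>) * measure lborel S"
    using measure_near_point(1)[OF S Sc yc _ om0] omB SB by auto
  have s2: "(p y - \<omega>) * measure lborel S \<le> measure P S"
    using measure_near_point(2)[OF S Sc yc _ om0] omB SB by auto
  have l0: "measure lborel S \<ge> 0" by simp
  have c1: "measure P (binset N j) * real N ^ CARD('r) * measure lborel S \<le> (p y + \<omega>) * measure lborel S"
    using mult_right_mono[OF a1 l0] .
  have c2: "(p y - \<omega>) * measure lborel S \<le> measure P (binset N j) * real N ^ CARD('r) * measure lborel S"
    using mult_right_mono[OF a2 l0] .
  show ?thesis unfolding \<omega>_def[symmetric] using s1 s2 c1 c2 by (simp add: algebra_simps abs_le_iff)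
qed

text \<open>Only the at most \<open>r N^(r-1)\<close> bins cut by the orthant below \<open>t\<close> contribute,
  each by at most \<open>2 (L r / N) N^-r\<close>.\<close>
lemma cdf_binned_bias:
  assumes N: "N > 0" and t: "t \<in> unit_cube"
  shows "\<bar>cdf_vec P t - (\<Sum>j\<in>bins N. measure P (binset N j) * real N ^ CARD('r)
                                    * measure lborel ({x. vle x t} \<inter> binset N j))\<bar>
     \<le> 2 * L * real CARD('r) ^ 2 / real N ^ 2"
proof -
  let ?A = "{x::real^'r. vle x t}"
  let ?boundary = "{j\<in>bins N. \<exists>i. j i = bin_idx N t i}"
  define \<omega> where "\<omega> = L * real CARD('r) / N"
  define d where "d j = measure P (?A \<inter> binset N j)
      - measure P (binset N j) * real N ^ CARD('r) * measure lborel (?A \<inter> binset N j)" for j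
  have "cdf_vec P t = (\<Sum>j\<in>bins N. measure P (?A \<inter> binset N j))"
    unfolding cdf_vec_def using measure_bin_decomposition[OF N vle_sets] by simp
  hence diff: "cdf_vec P t - (\<Sum>j\<in>bins N. measure P (binset N j) * real N ^ CARD('r)
                                    * measure lborel (?A \<inter> binset N j)) = (\<Sum>j\<in>bins N. d j)"
    unfolding d_def by (simp add: sum_subtractf)
  have "\<bar>\<Sum>j\<in>bins N. d j\<bar> \<le> (\<Sum>j\<in>bins N. \<bar>d j\<bar>)" by (rule sum_abs)
  also have "\<dots> = (\<Sum>j\<in>?boundary. \<bar>d j\<bar>)"
    using bin_bias_off_boundary[OF N t] by (intro sum.mono_neutral_right finite_bins) (auto simp: d_def)
  also have "\<dots> \<le> (\<Sum>j\<in>?boundary. 2 * \<omega> * (1 / real N) ^ CARD('r))"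
  proof (intro sum_mono)
    fix j assume "j \<in> ?boundary"
    hence j: "j \<in> bins N" by simp
    have "\<bar>d j\<bar> \<le> 2 * \<omega> * measure lborel (?A \<inter> binset N j)"
      unfolding d_def \<omega>_def using binset_sets[OF N] vle_sets by (intro bin_bias[OF N j] sets.Int) auto
    also have "\<dots> \<le> 2 * \<omega> * (1 / real N) ^ CARD('r)"
      using L_nonneg by (intro mult_left_mono measure_bin_slice_le[OF N j vle_sets]) (auto simp: \<omega>_def)
    finally show "\<bar>d j\<bar> \<le> 2 * \<omega> * (1 / real N) ^ CARD('r)" .
  qed
  also have "\<dots> = real (card ?boundary) * (2 * \<omega> * (1 / real N) ^ CARD('r))" by simp
  also have "\<dots> \<le> real (CARD('r) * N ^ (CARD('r) - 1)) * (2 * \<omega> * (1 / real N) ^ CARD('r))"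
  proof (rule mult_right_mono)
    show "real (card ?boundary) \<le> real (CARD('r) * N ^ (CARD('r) - 1))"
      using card_bins_sharing_coord[OF bin_idx_bins[OF N t]] by (rule of_nat_mono)
    show "0 \<le> 2 * \<omega> * (1 / real N) ^ CARD('r)" using L_nonneg by (simp add: \<omega>_def)
  qed
  also have "\<dots> = 2 * L * real CARD('r) ^ 2 / real N ^ 2"
    unfolding \<omega>_def by (rule boundary_bias_total[OF N]) (simp add: Suc_le_eq)
  finally show ?thesis unfolding diff .
qed
end

definition priv_measure :: "nat \<Rightarrow> nat \<Rightarrow> real \<Rightarrow> (nat \<Rightarrow> real^'r::finite) \<Rightarrow> (real^'r) measure" where
  "priv_measure N n \<delta> xs = density lborel (\<lambda>z. ennreal (priv_density N n \<delta> xs z))"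

definition bin_weight :: "nat \<Rightarrow> nat \<Rightarrow> real \<Rightarrow> (nat \<Rightarrow> real^'r::finite) \<Rightarrow> ('r \<Rightarrow> nat) \<Rightarrow> real" where
  "bin_weight N n \<delta> xs j = (1 - \<delta>) * (real (bin_count N n xs j) / real n * real N ^ CARD('r)) + \<delta>"

lemma bin_weight_nonneg: "0 \<le> \<delta> \<Longrightarrow> \<delta> \<le> 1 \<Longrightarrow> bin_weight N n \<delta> xs j \<ge> 0"
  by (simp add: bin_weight_def)

lemma bin_weight_le:
  fixes xs :: "nat \<Rightarrow> real^'r::finite"
  assumes N: "N > 0" and n: "n > 0" and d0: "0 \<le> \<delta>" and d1: "\<delta> \<le> 1"
  shows "bin_weight N n \<delta> xs j \<le> real N ^ CARD('r) + 1"
proof -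
  have "real (bin_count N n xs j) / real n \<le> 1" using bin_count_le[of N n xs j] n by simp
  hence "real (bin_count N n xs j) / real n * real N ^ CARD('r) \<le> 1 * real N ^ CARD('r)"
    by (intro mult_right_mono) auto
  hence "(1 - \<delta>) * (real (bin_count N n xs j) / real n * real N ^ CARD('r)) \<le> (1 - \<delta>) * real N ^ CARD('r)"
    using d1 by (intro mult_left_mono) auto
  also have "\<dots> \<le> real N ^ CARD('r)" using d0 by (simp add: algebra_simps)
  finally show ?thesis using d1 unfolding bin_weight_def by linarith
qed

lemma emeasure_priv_measure:
  fixes xs :: "nat \<Rightarrow> real^'r::finite"
  assumes N: "N > 0" and d0: "0 \<le> \<delta>" and d1: "\<delta> \<le> 1" and A: "A \<in> sets borel"
  shows "emeasure (priv_measure N n \<delta> xs) A = ennreal (\<Sum>j\<in>bins N. bin_weight N n \<delta> xs j * measure lborel (A \<inter> binset N j))"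
proof -
  have "priv_measure N n \<delta> xs = density lborel (\<lambda>x. ennreal (\<Sum>j\<in>bins N. indicator (binset N j) x * bin_weight N n \<delta> xs j))"
    unfolding priv_measure_def bin_weight_def by (simp add: priv_density_piecewise[OF N])
  thus ?thesis using emeasure_piecewise_density[OF N bin_weight_nonneg[OF d0 d1] A] by simp
qed

lemma sets_priv_measure[simp]: "sets (priv_measure N n \<delta> xs) = sets borel"
  by (simp add: priv_measure_def)

lemma space_priv_measure[simp]: "space (priv_measure N n \<delta> xs) = UNIV"
  by (simp add: priv_measure_def)

lemma prob_space_priv_measure:
  fixes xs :: "nat \<Rightarrow> real^'r::finite"
  assumes N: "N > 0" and n: "n > 0" and d0: "0 \<le> \<delta>" and d1: "\<delta> \<le> 1"
    and xs: "\<forall>i<n. xs i \<in> unit_cube"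
  shows "prob_space (priv_measure N n \<delta> xs)"
proof
  have lamB: "measure lborel (UNIV \<inter> binset N j) = (1 / real N) ^ CARD('r)" if "j \<in> bins N" for j :: "'r \<Rightarrow> nat"
    using emeasure_binset[OF N that] by (simp add: measure_def)
  have Nr: "real N ^ CARD('r) * (1 / real N) ^ CARD('r) = 1" using N by (simp add: power_one_over)
  have "(\<Sum>j\<in>bins N. bin_weight N n \<delta> xs j * measure lborel (UNIV \<inter> binset N j))
      = (\<Sum>j\<in>bins N. (1 - \<delta>) * (real (bin_count N n xs j) / real n) + \<delta> * (1 / real N) ^ CARD('r))"
  proof (intro sum.cong refl)
    fix j :: "'r \<Rightarrow> nat" assume j: "j \<in> bins N"
    have g: "((1-d)*(c*Y)+d)*X = (1-d)*c*(Y*X) + d*X" for d c X Y :: real by (simp add: algebra_simps)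
    show "bin_weight N n \<delta> xs j * measure lborel (UNIV \<inter> binset N j)
      = (1 - \<delta>) * (real (bin_count N n xs j) / real n) + \<delta> * (1 / real N) ^ CARD('r)"
      unfolding bin_weight_def lamB[OF j] g Nr by simp
  qed
  also have "\<dots> = (1 - \<delta>) * (real (\<Sum>j\<in>bins N. bin_count N n xs j) / real n) + \<delta> * (real (card (bins N :: ('r \<Rightarrow> nat) set)) * (1 / real N) ^ CARD('r))"
    by (simp add: sum.distrib sum_distrib_left sum_divide_distrib)
  also have "\<dots> = 1"
    using bin_count_sum_all[OF N xs] n Nr by (simp add: card_bins)
  finally have "emeasure (priv_measure N n \<delta> xs) UNIV = 1"
    using emeasure_priv_measure[OF N d0 d1, of UNIV n xs] by simp
  thus "emeasure (priv_measure N n \<delta> xs) (space (priv_measure N n \<delta> xs)) = 1" by simp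
qed

lemma cdf_priv_measure:
  fixes xs :: "nat \<Rightarrow> real^'r::finite"
  assumes N: "N > 0" and d0: "0 \<le> \<delta>" and d1: "\<delta> \<le> 1"
  shows "cdf_vec (priv_measure N n \<delta> xs) t = (\<Sum>j\<in>bins N. bin_weight N n \<delta> xs j * measure lborel ({x. vle x t} \<inter> binset N j))"
proof -
  have "(\<Sum>j\<in>bins N. bin_weight N n \<delta> xs j * measure lborel ({x. vle x t} \<inter> binset N j)) \<ge> 0"
    by (intro sum_nonneg mult_nonneg_nonneg bin_weight_nonneg[OF d0 d1]) auto
  thus ?thesis unfolding cdf_vec_def
    using emeasure_priv_measure[OF N d0 d1 vle_sets, of n xs t] by (simp add: measure_def)
qed

text \<open>\<open>Q\<close> has density at most \<open>N^r + 1\<close>, so slabs of width \<open>b - a\<close> have small probability.\<close>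
lemma priv_measure_slab:
  fixes xs :: "nat \<Rightarrow> real^'r::finite" and i :: 'r
  assumes N: "N > 0" and n: "n > 0" and d0: "0 \<le> \<delta>" and d1: "\<delta> \<le> 1"
    and ab: "0 \<le> a" "a \<le> b" "b \<le> 1"
  shows "measure (priv_measure N n \<delta> xs) {x. a < x $ i \<and> x $ i \<le> b} \<le> (real N ^ CARD('r) + 1) * (b - a)"
proof -
  let ?S = "{x::real^'r. a < x $ i \<and> x $ i \<le> b}"
  have S: "?S \<in> sets borel" by measurable
  have nn: "0 \<le> (\<Sum>j\<in>bins N. bin_weight N n \<delta> xs j * measure lborel (?S \<inter> binset N j))"
    by (intro sum_nonneg mult_nonneg_nonneg bin_weight_nonneg[OF d0 d1]) auto
  have "measure (priv_measure N n \<delta> xs) ?S = (\<Sum>j\<in>bins N. bin_weight N n \<delta> xs j * measure lborel (?S \<inter> binset N j))"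
    using emeasure_priv_measure[OF N d0 d1 S, of n xs] nn by (simp add: measure_def)
  also have "\<dots> \<le> (\<Sum>j\<in>bins N. (real N ^ CARD('r) + 1) * measure lborel (?S \<inter> binset N j))"
    by (intro sum_mono mult_right_mono bin_weight_le[OF N n d0 d1]) auto
  also have "\<dots> = (real N ^ CARD('r) + 1) * measure lborel (?S \<inter> unit_cube)"
    by (simp add: sum_distrib_left[symmetric] sum_measure_bin_slices[OF N S])
  also have "\<dots> \<le> (real N ^ CARD('r) + 1) * (b - a)"
    by (intro mult_left_mono measure_slab_cube ab) auto
  finally show ?thesis .
qed

definition hist_l1_error :: "(real^'r::finite) measure \<Rightarrow> nat \<Rightarrow> nat \<Rightarrow> (nat \<Rightarrow> real^'r) \<Rightarrow> real" where
  "hist_l1_error P N n xs = (\<Sum>j\<in>bins N. \<bar>measure P (binset N j) - real (bin_count N n xs j) / real n\<bar>)"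

lemma mixture_deviation:
  fixes a h w l :: "'a \<Rightarrow> real"
  assumes I: "finite I" and w: "\<And>j. j \<in> I \<Longrightarrow> 0 \<le> w j \<and> w j \<le> 1"
    and h: "\<And>j. j \<in> I \<Longrightarrow> 0 \<le> h j" and sum_h: "(\<Sum>j\<in>I. h j) = 1"
    and l: "\<And>j. j \<in> I \<Longrightarrow> 0 \<le> l j" and sum_l: "(\<Sum>j\<in>I. l j) \<le> 1" and d: "0 \<le> \<delta>"
  shows "\<bar>(\<Sum>j\<in>I. a j * w j) - (\<Sum>j\<in>I. (1 - \<delta>) * h j * w j + \<delta> * l j)\<bar>
       \<le> (\<Sum>j\<in>I. \<bar>a j - h j\<bar>) + \<delta>"
proof -
  have split: "(\<Sum>j\<in>I. a j * w j) - (\<Sum>j\<in>I. (1 - \<delta>) * h j * w j + \<delta> * l j)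
      = (\<Sum>j\<in>I. (a j - h j) * w j) + \<delta> * ((\<Sum>j\<in>I. h j * w j) - (\<Sum>j\<in>I. l j))"
    by (simp add: sum_subtractf sum.distrib sum_distrib_left algebra_simps)
  have "\<bar>\<Sum>j\<in>I. (a j - h j) * w j\<bar> \<le> (\<Sum>j\<in>I. \<bar>(a j - h j) * w j\<bar>)" by (rule sum_abs)
  also have "\<dots> \<le> (\<Sum>j\<in>I. \<bar>a j - h j\<bar>)"
    using w by (intro sum_mono) (auto simp: abs_mult intro: mult_left_le)
  finally have main: "\<bar>\<Sum>j\<in>I. (a j - h j) * w j\<bar> \<le> (\<Sum>j\<in>I. \<bar>a j - h j\<bar>)" .
  have "0 \<le> (\<Sum>j\<in>I. h j * w j)" using h w by (intro sum_nonneg) auto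
  moreover have "(\<Sum>j\<in>I. h j * w j) \<le> (\<Sum>j\<in>I. h j)"
    using h w by (intro sum_mono) (auto intro: mult_left_le)
  moreover have "0 \<le> (\<Sum>j\<in>I. l j)" using l by (intro sum_nonneg) auto
  ultimately have "\<bar>(\<Sum>j\<in>I. h j * w j) - (\<Sum>j\<in>I. l j)\<bar> \<le> 1" using sum_h sum_l by linarith
  hence "\<bar>\<delta> * ((\<Sum>j\<in>I. h j * w j) - (\<Sum>j\<in>I. l j))\<bar> \<le> \<delta>"
    using d by (simp add: abs_mult mult_left_le)
  thus ?thesis unfolding split using main by linarith
qed

context lipschitz_cube_density
begin

lemma cdf_distance_to_priv:
  fixes xs :: "nat \<Rightarrow> real^'r"
  assumes N: "N > 0" and n: "n > 0" and d0: "0 \<le> \<delta>" and d1: "\<delta> \<le> 1"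
    and xs: "\<forall>i<n. xs i \<in> unit_cube" and t: "t \<in> unit_cube"
  shows "\<bar>cdf_vec P t - cdf_vec (priv_measure N n \<delta> xs) t\<bar>
     \<le> 2 * L * real CARD('r) ^ 2 / real N ^ 2 + hist_l1_error P N n xs + \<delta>"
proof -
  define lam where "lam j = measure lborel ({x. vle x t} \<inter> binset N j)" for j
  define w where "w j = real N ^ CARD('r) * lam j" for j
  define h where "h j = real (bin_count N n xs j) / real n" for j
  have cdf_Q: "cdf_vec (priv_measure N n \<delta> xs) t = (\<Sum>j\<in>bins N. (1 - \<delta>) * h j * w j + \<delta> * lam j)"
    unfolding cdf_priv_measure[OF N d0 d1] bin_weight_def
    by (intro sum.cong refl) (simp add: h_def w_def lam_def algebra_simps)
  have bias: "\<bar>cdf_vec P t - (\<Sum>j\<in>bins N. measure P (binset N j) * w j)\<bar>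
      \<le> 2 * L * real CARD('r) ^ 2 / real N ^ 2"
    using cdf_binned_bias[OF N t] by (simp add: w_def lam_def mult.assoc)
  have sum_h: "(\<Sum>j\<in>bins N. h j) = 1"
    using bin_count_sum_all[OF N xs] n by (simp add: h_def sum_divide_distrib[symmetric] flip: of_nat_sum)
  have "(\<Sum>j\<in>bins N. lam j) \<le> (\<Sum>j\<in>(bins N :: ('r \<Rightarrow> nat) set). (1 / real N) ^ CARD('r))"
    unfolding lam_def by (intro sum_mono measure_bin_slice_le[OF N _ vle_sets])
  also have "\<dots> = 1" using N by (simp add: card_bins power_one_over)
  finally have sum_lam: "(\<Sum>j\<in>bins N. lam j) \<le> 1" .
  have "\<bar>(\<Sum>j\<in>bins N. measure P (binset N j) * w j) - cdf_vec (priv_measure N n \<delta> xs) t\<bar>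
      \<le> hist_l1_error P N n xs + \<delta>"
    unfolding cdf_Q hist_l1_error_def h_def[symmetric]
  proof (rule mixture_deviation[OF finite_bins _ _ sum_h _ sum_lam d0])
    show "0 \<le> w j \<and> w j \<le> 1" if "j \<in> bins N" for j
      unfolding w_def lam_def using scaled_measure_bin_slice_le[OF N that vle_sets] by simp
  qed (auto simp: h_def lam_def)
  thus ?thesis using bias by linarith
qed
end

text \<open>The grid \<open>{0, 1/M, \<dots>, 1}^r\<close> used to reduce the supremum over the cube to a finite maximum.\<close>
definition grid :: "nat \<Rightarrow> (real^'r::finite) set" where
  "grid M = (\<lambda>g. \<chi> i. real (g i) / real M) ` (PiE UNIV (\<lambda>_. {..M}))"

lemma finite_grid: "finite (grid M)"
  by (auto simp: grid_def intro!: finite_PiE)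

lemma card_grid: "card (grid M :: (real^'r::finite) set) \<le> Suc M ^ CARD('r)"
proof -
  have "card (grid M :: (real^'r) set) \<le> card (PiE (UNIV::'r set) (\<lambda>_. {..M}))"
    unfolding grid_def by (intro card_image_le finite_PiE) auto
  also have "\<dots> = Suc M ^ CARD('r)" by (simp add: card_PiE)
  finally show ?thesis .
qed

text \<open>The orthants below grid points: the events whose empirical frequencies must be accurate
  for the synthetic sample.\<close>
definition grid_orthants :: "nat \<Rightarrow> (real^'r::finite) set set" where
  "grid_orthants M = (\<lambda>g. {x. vle x g}) ` grid M"

lemma grid_orthants_family:
  shows "finite (grid_orthants M :: (real^'r::finite) set set)"
    and "card (grid_orthants M :: (real^'r::finite) set set) \<le> Suc M ^ CARD('r)"
    and "grid_orthants M \<subseteq> sets (borel :: (real^'r::finite) measure)"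
proof -
  show "finite (grid_orthants M :: (real^'r) set set)"
    unfolding grid_orthants_def using finite_grid by auto
  show "card (grid_orthants M :: (real^'r) set set) \<le> Suc M ^ CARD('r)"
    unfolding grid_orthants_def
    using card_image_le[OF finite_grid, of "\<lambda>g. {x::real^'r. vle x g}" M] card_grid[where 'r='r, of M]
    by linarith
  show "grid_orthants M \<subseteq> sets (borel :: (real^'r) measure)"
    unfolding grid_orthants_def using vle_sets by auto
qed

text \<open>Every point of the cube is bracketed, componentwise, by two grid points at distance
  at most \<open>1/M\<close> in each coordinate (round every coordinate down, resp. up).\<close>
lemma grid_bracket:
  fixes t :: "real^'r::finite"
  assumes M: "M > 0" and t: "t \<in> unit_cube"
  obtains gm gp where "gm \<in> grid M" "gp \<in> grid M" "vle gm t" "vle t gp"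
    "\<And>i. 0 \<le> gm $ i" "\<And>i. gp $ i \<le> 1" "\<And>i. gp $ i \<le> gm $ i + 1 / real M"
proof -
  define gp :: "real^'r" where "gp = (\<chi> i. real (nat \<lceil>real M * t $ i\<rceil>) / real M)"
  define gm :: "real^'r" where "gm = (\<chi> i. real (nat \<lfloor>real M * t $ i\<rfloor>) / real M)"
  have Mt: "0 \<le> real M * t $ i" "real M * t $ i \<le> real M" for i
    using t M by (auto simp: unit_cube_def mult_le_cancel_left1)
  have cp: "real (nat \<lceil>real M * t $ i\<rceil>) = real_of_int \<lceil>real M * t $ i\<rceil>" for i
    using Mt[of i] by (simp add: ceiling_le_zero)
  have cm: "real (nat \<lfloor>real M * t $ i\<rfloor>) = real_of_int \<lfloor>real M * t $ i\<rfloor>" for i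
    using Mt[of i] by simp
  have gp_grid: "gp \<in> grid M"
  proof -
    have "nat \<lceil>real M * t $ i\<rceil> \<le> M" for i using Mt[of i]
      by (metis ceiling_le_iff ceiling_of_nat nat_le_iff of_int_of_nat_eq)
    thus ?thesis unfolding grid_def gp_def
      by (intro image_eqI[of _ _ "\<lambda>i. nat \<lceil>real M * t $ i\<rceil>"]) auto
  qed
  have gm_grid: "gm \<in> grid M"
  proof -
    have "nat \<lfloor>real M * t $ i\<rfloor> \<le> M" for i using Mt[of i]
      by (metis floor_le_iff floor_of_nat nat_le_iff of_int_of_nat_eq le_floor_iff less_floor_iff
          floor_mono zle_int)
    thus ?thesis unfolding grid_def gm_def
      by (intro image_eqI[of _ _ "\<lambda>i. nat \<lfloor>real M * t $ i\<rfloor>"]) auto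
  qed
  have "t $ i \<le> gp $ i" for i
    using le_of_int_ceiling[of "real M * t $ i"] M by (simp add: gp_def cp field_simps)
  moreover have "gm $ i \<le> t $ i" for i
    using of_int_floor_le[of "real M * t $ i"] M by (simp add: gm_def cm field_simps)
  moreover have "gp $ i \<le> gm $ i + 1 / real M" for i
  proof -
    have "\<lceil>real M * t $ i\<rceil> \<le> \<lfloor>real M * t $ i\<rfloor> + 1"
      unfolding ceiling_le_iff using floor_correct[of "real M * t $ i"] by simp
    hence "real_of_int \<lceil>real M * t $ i\<rceil> \<le> real_of_int \<lfloor>real M * t $ i\<rfloor> + 1" by linarith
    thus ?thesis using M by (simp add: gp_def gm_def cp cm field_simps)
  qed
  moreover have "0 \<le> gm $ i" for i by (simp add: gm_def)
  moreover have "gp $ i \<le> 1" for i using gp_grid M by (auto simp: grid_def)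
  ultimately show ?thesis using that gp_grid gm_grid by (simp add: vle_def)
qed

lemma cdf_increment_le:
  fixes Q :: "(real^'r::finite) measure"
  assumes Q: "prob_space Q" and sQ: "sets Q = sets borel"
    and slab: "\<And>i a b. 0 \<le> a \<Longrightarrow> a \<le> b \<Longrightarrow> b \<le> 1 \<Longrightarrow> measure Q {x. a < x $ i \<and> x $ i \<le> b} \<le> D * (b - a)"
    and D: "D \<ge> 0" and lo: "\<And>i. 0 \<le> gm $ i" and hi: "\<And>i. gp $ i \<le> 1"
    and le: "vle gm gp" and gap: "\<And>i. gp $ i \<le> gm $ i + 1 / real M"
  shows "measure Q {x. vle x gp} \<le> measure Q {x. vle x gm} + real CARD('r) * D / real M"
proof -
  interpret Q: prob_space Q by (rule Q)
  define slabs where "slabs = (\<Union>i. {x. gm $ i < x $ i \<and> x $ i \<le> gp $ i})"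
  have slab_sets: "{x::real^'r. a < x $ i \<and> x $ i \<le> b} \<in> sets Q" for a b i
    unfolding sQ by measurable
  have "measure Q {x. vle x gp} \<le> measure Q ({x. vle x gm} \<union> slabs)"
    using slab_sets vle_sets sQ
    by (intro Q.finite_measure_mono) (auto simp: vle_def not_le slabs_def)
  also have "\<dots> \<le> measure Q {x. vle x gm} + measure Q slabs"
    using slab_sets vle_sets sQ by (intro measure_Un_le) (auto simp: slabs_def)
  also have "measure Q slabs \<le> (\<Sum>i\<in>UNIV. measure Q {x. gm $ i < x $ i \<and> x $ i \<le> gp $ i})"
    unfolding slabs_def using slab_sets by (intro measure_UNION_le) auto
  also have "\<dots> \<le> (\<Sum>i\<in>(UNIV::'r set). D * (1 / real M))"
  proof (intro sum_mono)
    fix i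
    have "measure Q {x. gm $ i < x $ i \<and> x $ i \<le> gp $ i} \<le> D * (gp $ i - gm $ i)"
      using slab[OF lo _ hi] le by (simp add: vle_def)
    also have "\<dots> \<le> D * (1 / real M)" using gap[of i] D by (intro mult_left_mono) auto
    finally show "measure Q {x. gm $ i < x $ i \<and> x $ i \<le> gp $ i} \<le> D * (1 / real M)" .
  qed
  finally show ?thesis by simp
qed

lemma ecdf_vec_eq_empirical_freq: "ecdf_vec k zs t = empirical_freq k zs {x. vle x t}"
  by (simp add: ecdf_vec_def empirical_freq_def)

lemma ecdf_mono: "vle s t \<Longrightarrow> ecdf_vec k zs s \<le> ecdf_vec k zs t"
proof -
  assume st: "vle s t"
  have "{i\<in>{..<k}. vle (zs i) s} \<subseteq> {i\<in>{..<k}. vle (zs i) t}"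
    using st by (auto simp: vle_def intro: order_trans)
  hence "card {i\<in>{..<k}. vle (zs i) s} \<le> card {i\<in>{..<k}. vle (zs i) t}"
    by (intro card_mono) auto
  thus ?thesis by (simp add: ecdf_vec_def divide_right_mono)
qed

text \<open>Discretization of the supremum: if the empirical cdf is \<open>\<epsilon>\<close>-close to the cdf of \<open>Q\<close> on the
  grid, then it is \<open>(\<epsilon> + r D / M)\<close>-close on the whole cube, by monotonicity of both cdfs.\<close>
lemma sup_deviation_by_grid:
  fixes Q :: "(real^'r::finite) measure"
  assumes Q: "prob_space Q" and sQ: "sets Q = sets borel"
    and slab: "\<And>i a b. 0 \<le> a \<Longrightarrow> a \<le> b \<Longrightarrow> b \<le> 1 \<Longrightarrow> measure Q {x. a < x $ i \<and> x $ i \<le> b} \<le> D * (b - a)"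
    and M: "M > 0" and D: "D \<ge> 0"
    and close: "\<forall>g\<in>grid M. \<bar>measure Q {x. vle x g} - ecdf_vec k zs g\<bar> < \<epsilon>"
    and t: "t \<in> unit_cube"
  shows "\<bar>measure Q {x. vle x t} - ecdf_vec k zs t\<bar> \<le> \<epsilon> + real CARD('r) * D / real M"
proof -
  interpret Q: prob_space Q by (rule Q)
  obtain gm gp where grid: "gm \<in> grid M" "gp \<in> grid M" and br: "vle gm t" "vle t gp"
    and bounds: "\<And>i. 0 \<le> gm $ i" "\<And>i. gp $ i \<le> 1" "\<And>i. gp $ i \<le> gm $ i + 1 / real M"
    using grid_bracket[OF M t] by blast
  have gm_gp: "vle gm gp" using br by (auto simp: vle_def intro: order_trans)
  have "measure Q {x. vle x gm} \<le> measure Q {x. vle x t}"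
    "measure Q {x. vle x t} \<le> measure Q {x. vle x gp}"
    using br vle_sets sQ by (auto intro!: Q.finite_measure_mono simp: vle_def intro: order_trans)
  moreover have "ecdf_vec k zs gm \<le> ecdf_vec k zs t" "ecdf_vec k zs t \<le> ecdf_vec k zs gp"
    using br by (auto intro: ecdf_mono)
  moreover have "measure Q {x. vle x gp} \<le> measure Q {x. vle x gm} + real CARD('r) * D / real M"
    by (rule cdf_increment_le[OF Q sQ slab D bounds(1,2) gm_gp bounds(3)])
  moreover have "\<bar>measure Q {x. vle x gp} - ecdf_vec k zs gp\<bar> < \<epsilon>"
    "\<bar>measure Q {x. vle x gm} - ecdf_vec k zs gm\<bar> < \<epsilon>"
    using close grid by auto
  ultimately show ?thesis by (simp add: abs_le_iff) linarith
qed

text \<open>If every partial sum \<open>\<Sum>\<^sub>J f\<close> is small, so is \<open>\<Sum> |f|\<close>: split \<open>I\<close> into the indices where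
  \<open>f\<close> is nonnegative and where it is negative.\<close>
lemma sum_abs_le_by_partial_sums:
  fixes f :: "'a \<Rightarrow> real"
  assumes I: "finite I" and small: "\<And>J. J \<subseteq> I \<Longrightarrow> \<bar>\<Sum>j\<in>J. f j\<bar> \<le> \<epsilon>"
  shows "(\<Sum>j\<in>I. \<bar>f j\<bar>) \<le> 2 * \<epsilon>"
proof -
  define Jp where "Jp = {j\<in>I. f j \<ge> 0}"
  define Jm where "Jm = {j\<in>I. f j < 0}"
  have fin: "finite Jp" "finite Jm" using I by (auto simp: Jp_def Jm_def)
  have "I = Jp \<union> Jm" "Jp \<inter> Jm = {}" by (auto simp: Jp_def Jm_def)
  hence "(\<Sum>j\<in>I. \<bar>f j\<bar>) = (\<Sum>j\<in>Jp. \<bar>f j\<bar>) + (\<Sum>j\<in>Jm. \<bar>f j\<bar>)"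
    using sum.union_disjoint[OF fin] by metis
  also have "(\<Sum>j\<in>Jp. \<bar>f j\<bar>) = (\<Sum>j\<in>Jp. f j)" by (intro sum.cong) (auto simp: Jp_def)
  also have "(\<Sum>j\<in>Jm. \<bar>f j\<bar>) = - (\<Sum>j\<in>Jm. f j)"
    by (subst sum_negf[symmetric]) (intro sum.cong, auto simp: Jm_def)
  finally show ?thesis
    using small[of Jp] small[of Jm] by (auto simp: Jp_def Jm_def)
qed

text \<open>All unions of bins: the events whose empirical frequencies must be accurate for the data.\<close>
definition bin_unions :: "nat \<Rightarrow> (real^'r::finite) set set" where
  "bin_unions N = (\<lambda>J. \<Union>j\<in>J. binset N j) ` Pow (bins N)"

lemma bin_unions_family:
  assumes N: "N > 0"
  shows "finite (bin_unions N :: (real^'r::finite) set set)"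
    and "card (bin_unions N :: (real^'r::finite) set set) \<le> 2 ^ (N ^ CARD('r))"
    and "bin_unions N \<subseteq> sets (borel :: (real^'r::finite) measure)"
proof -
  show "finite (bin_unions N :: (real^'r) set set)"
    unfolding bin_unions_def using finite_bins by auto
  have "card (bin_unions N :: (real^'r) set set) \<le> card (Pow (bins N :: ('r \<Rightarrow> nat) set))"
    unfolding bin_unions_def by (intro card_image_le) (simp add: finite_bins)
  thus "card (bin_unions N :: (real^'r) set set) \<le> 2 ^ (N ^ CARD('r))"
    by (simp add: card_Pow finite_bins card_bins)
  show "bin_unions N \<subseteq> sets (borel :: (real^'r) measure)"
    unfolding bin_unions_def using binset_sets[OF N]
    by (auto intro!: sets.finite_UN finite_subset[OF _ finite_bins])
qed

lemma cdf_bounds: "prob_space P \<Longrightarrow> 0 \<le> cdf_vec P t \<and> cdf_vec P t \<le> 1"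
  by (simp add: cdf_vec_def prob_space.prob_le_1)

context cube_density
begin

lemma AE_sample_in_cube:
  fixes n :: nat
  shows "AE xs in PiM {..<n} (\<lambda>_. P). \<forall>i\<in>{..<n}. xs i \<in> unit_cube"
proof (intro AE_finite_allI)
  fix i assume i: "i \<in> {..<n}"
  have "AE x in P. x \<in> unit_cube" by (subst AE_density) (auto simp: indicator_def)
  thus "AE xs in PiM {..<n} (\<lambda>_. P). xs i \<in> unit_cube"
    using AE_PiM_component[of "{..<n}" "\<lambda>_. P" i "\<lambda>x. x \<in> unit_cube"] i P_prob by blast
qed auto

lemma deviation_bin_union:
  assumes N: "N > 0" and J: "J \<subseteq> bins N"
  shows "measure P (\<Union>j\<in>J. binset N j) - empirical_freq n xs (\<Union>j\<in>J. binset N j)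
       = (\<Sum>j\<in>J. measure P (binset N j) - real (bin_count N n xs j) / real n)"
proof -
  interpret PP: prob_space P by (rule P_prob)
  have [measurable]: "binset N j \<in> sets borel" for j :: "'r \<Rightarrow> nat" using binset_sets[OF N] .
  have fJ: "finite J" using J finite_subset finite_bins by blast
  have "measure P (\<Union>j\<in>J. binset N j) = (\<Sum>j\<in>J. measure P (binset N j))"
  proof (intro measure_finite_Union fJ)
    show "disjoint_family_on (binset N) J" by (auto simp: disjoint_family_on_def binset_def)
  qed (auto simp: PP.emeasure_finite)
  moreover have "empirical_freq n xs (\<Union>j\<in>J. binset N j) = (\<Sum>j\<in>J. real (bin_count N n xs j) / real n)"
    using bin_count_sum[OF fJ, of N n xs]
    by (simp add: empirical_freq_def sum_divide_distrib[symmetric] flip: of_nat_sum)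
  ultimately show ?thesis by (simp add: sum_subtractf)
qed

lemma hist_l1_error_bounds:
  fixes xs :: "nat \<Rightarrow> real^'r"
  assumes N: "N > 0" and n: "n > 0" and xs: "\<forall>i<n. xs i \<in> unit_cube"
  shows "hist_l1_error P N n xs \<le> 2"
    and "hist_l1_error P N n xs \<le> 2 * \<epsilon> \<or>
      (\<exists>S\<in>bin_unions N. \<epsilon> \<le> \<bar>empirical_freq n xs S - measure P S\<bar>)"
proof -
  interpret PP: prob_space P by (rule P_prob)
  have "(\<Sum>j\<in>bins N. measure P (binset N j)) = 1"
    using measure_bin_decomposition[OF N, of UNIV] PP.prob_space by simp
  moreover have "(\<Sum>j\<in>bins N. real (bin_count N n xs j) / real n) = 1"
    using bin_count_sum_all[OF N xs] n by (simp add: sum_divide_distrib[symmetric] flip: of_nat_sum)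
  moreover have "hist_l1_error P N n xs \<le> (\<Sum>j\<in>bins N. measure P (binset N j) + real (bin_count N n xs j) / real n)"
    unfolding hist_l1_error_def by (intro sum_mono) (auto simp: abs_le_iff)
  ultimately show "hist_l1_error P N n xs \<le> 2" by (simp add: sum.distrib)
  show "hist_l1_error P N n xs \<le> 2 * \<epsilon> \<or>
      (\<exists>S\<in>bin_unions N. \<epsilon> \<le> \<bar>empirical_freq n xs S - measure P S\<bar>)"
  proof (rule disjCI)
    assume "\<not> (\<exists>S\<in>bin_unions N. \<epsilon> \<le> \<bar>empirical_freq n xs S - measure P S\<bar>)"
    hence "\<bar>\<Sum>j\<in>J. measure P (binset N j) - real (bin_count N n xs j) / real n\<bar> \<le> \<epsilon>"
      if J: "J \<subseteq> bins N" for J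
    proof -
      let ?U = "\<Union>j\<in>J. binset N j"
      have "?U \<in> bin_unions N" using J by (auto simp: bin_unions_def)
      hence "\<bar>measure P ?U - empirical_freq n xs ?U\<bar> < \<epsilon>"
        using \<open>\<not> _\<close> by (subst abs_minus_commute) (auto simp: not_le)
      thus ?thesis using deviation_bin_union[OF N J, of n xs] by simp
    qed
    thus "hist_l1_error P N n xs \<le> 2 * \<epsilon>"
      unfolding hist_l1_error_def by (rule sum_abs_le_by_partial_sums[OF finite_bins])
  qed
qed

end

context lipschitz_cube_density
begin

lemma cdf_error_on_good_event:
  fixes xs :: "nat \<Rightarrow> real^'r"
  assumes N: "N > 0" and n: "n > 0" and d0: "0 \<le> \<delta>" and d1: "\<delta> \<le> 1"
    and xs: "\<forall>i<n. xs i \<in> unit_cube" and Mg: "Mg > 0"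
    and close: "\<forall>g\<in>grid Mg. \<bar>measure (priv_measure N n \<delta> xs) {x. vle x g} - ecdf_vec k zs g\<bar> < \<epsilon>"
    and t: "t \<in> unit_cube"
  shows "\<bar>cdf_vec P t - ecdf_vec k zs t\<bar>
     \<le> 2 * L * real CARD('r) ^ 2 / real N ^ 2 + hist_l1_error P N n xs + \<delta>
        + real CARD('r) * (real N ^ CARD('r) + 1) / real Mg + \<epsilon>"
proof -
  let ?Q = "priv_measure N n \<delta> xs"
  have "\<bar>measure ?Q {x. vle x t} - ecdf_vec k zs t\<bar> \<le> \<epsilon> + real CARD('r) * (real N ^ CARD('r) + 1) / real Mg"
    by (rule sup_deviation_by_grid[OF prob_space_priv_measure[OF N n d0 d1 xs] _
          priv_measure_slab[OF N n d0 d1] Mg _ close t]) auto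
  moreover have "\<bar>cdf_vec P t - cdf_vec ?Q t\<bar> \<le> 2 * L * real CARD('r) ^ 2 / real N ^ 2 + hist_l1_error P N n xs + \<delta>"
    by (rule cdf_distance_to_priv[OF N n d0 d1 xs t])
  ultimately show ?thesis by (simp add: cdf_vec_def)
qed

lemma expected_error_given_sample:
  fixes xs :: "nat \<Rightarrow> real^'r"
  assumes N: "N > 0" and n: "n > 0" and d0: "0 \<le> \<delta>" and d1: "\<delta> \<le> 1"
    and xs: "\<forall>i<n. xs i \<in> unit_cube" and k: "k > 0" and Mg: "Mg > 0" and eps: "0 \<le> \<epsilon>"
  shows "(\<integral>\<^sup>+ zs. (SUP x\<in>unit_cube. ennreal \<bar>cdf_vec P x - ecdf_vec k zs x\<bar>)
           \<partial>PiM {..<k} (\<lambda>_. priv_measure N n \<delta> xs))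
     \<le> ennreal (2 * L * real CARD('r) ^ 2 / real N ^ 2 + hist_l1_error P N n xs + \<delta>
           + real CARD('r) * (real N ^ CARD('r) + 1) / real Mg
         + (\<epsilon> + 2 * real (Suc Mg ^ CARD('r)) * exp (-2 * real k * \<epsilon>\<^sup>2)))"
proof -
  let ?Q = "priv_measure N n \<delta> xs"
  define c where "c = 2 * L * real CARD('r) ^ 2 / real N ^ 2 + hist_l1_error P N n xs + \<delta>
           + real CARD('r) * (real N ^ CARD('r) + 1) / real Mg"
  define SS where "SS = (grid_orthants Mg :: (real^'r) set set)"
  have Q: "prob_space ?Q" by (rule prob_space_priv_measure[OF N n d0 d1 xs])
  have fin: "finite SS" and card_SS: "card SS \<le> Suc Mg ^ CARD('r)"
    unfolding SS_def by (rule grid_orthants_family)+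
  have SS_sets: "SS \<subseteq> sets ?Q" unfolding SS_def using grid_orthants_family(3) by simp
  have c_nonneg: "0 \<le> c"
    unfolding c_def hist_l1_error_def using L_nonneg d0 by (intro add_nonneg_nonneg sum_nonneg) auto
  have "(\<integral>\<^sup>+ zs. (SUP x\<in>unit_cube. ennreal \<bar>cdf_vec P x - ecdf_vec k zs x\<bar>) \<partial>PiM {..<k} (\<lambda>_. ?Q))
      \<le> ennreal (c + 1 * (\<epsilon> + 2 * real (card SS) * exp (-2 * real k * \<epsilon>\<^sup>2)))"
  proof (rule nn_integral_le_by_deviation[OF Q k fin SS_sets eps c_nonneg])
    fix zs
    let ?h = "SUP x\<in>unit_cube. ennreal \<bar>cdf_vec P x - ecdf_vec k zs x\<bar>"
    have "?h \<le> ennreal (c + 1)"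
    proof (rule SUP_least)
      fix x
      have "\<bar>cdf_vec P x - ecdf_vec k zs x\<bar> \<le> 1"
        using cdf_bounds[OF P_prob, of x] empirical_freq_bounds[of k zs "{y. vle y x}"]
        by (simp add: ecdf_vec_eq_empirical_freq abs_le_iff)
      thus "ennreal \<bar>cdf_vec P x - ecdf_vec k zs x\<bar> \<le> ennreal (c + 1)"
        using c_nonneg by (intro ennreal_leI) linarith
    qed
    moreover have "?h \<le> ennreal (c + 1 * \<epsilon>)"
      if good: "\<not> (\<exists>S\<in>SS. \<epsilon> \<le> \<bar>empirical_freq k zs S - measure ?Q S\<bar>)"
    proof (rule SUP_least)
      fix t :: "real^'r" assume t: "t \<in> unit_cube"
      have "\<forall>g\<in>grid Mg. \<bar>measure ?Q {x. vle x g} - ecdf_vec k zs g\<bar> < \<epsilon>"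
        using good unfolding SS_def grid_orthants_def
        by (auto simp: ecdf_vec_eq_empirical_freq abs_minus_commute not_le)
      from cdf_error_on_good_event[OF N n d0 d1 xs Mg this t]
      show "ennreal \<bar>cdf_vec P t - ecdf_vec k zs t\<bar> \<le> ennreal (c + 1 * \<epsilon>)"
        unfolding c_def by (intro ennreal_leI) simp
    qed
    ultimately show "?h \<le> ennreal (c + 1) \<and> (?h \<le> ennreal (c + 1 * \<epsilon>) \<or>
      (\<exists>S\<in>SS. \<epsilon> \<le> \<bar>empirical_freq k zs S - measure ?Q S\<bar>))"
      by blast
  qed simp
  also have "\<dots> \<le> ennreal (c + 1 * (\<epsilon> + 2 * real (Suc Mg ^ CARD('r)) * exp (-2 * real k * \<epsilon>\<^sup>2)))"
    using of_nat_mono[OF card_SS] by (intro ennreal_leI add_left_mono mult_left_mono mult_right_mono) auto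
  finally show ?thesis unfolding c_def by simp
qed

text \<open>The data
  enter only through the histogram error, which is controlled by a union bound over all
  \<open>2^(N^r)\<close> unions of bins.\<close>
lemma expected_sup_error_bound:
  assumes N: "N > 0" and n: "n > 0" and d0: "0 \<le> \<delta>" and d1: "\<delta> \<le> 1"
    and k: "k > 0" and Mg: "Mg > 0" and eZ: "0 \<le> \<epsilon>Z" and eX: "0 \<le> \<epsilon>X"
  shows "expected_sup_error P n N k \<delta>
     \<le> ennreal ((2 * L * real CARD('r) ^ 2 / real N ^ 2 + \<delta> + real CARD('r) * (real N ^ CARD('r) + 1) / real Mg
            + (\<epsilon>Z + 2 * real (Suc Mg ^ CARD('r)) * exp (-2 * real k * \<epsilon>Z\<^sup>2)))
         + 2 * (\<epsilon>X + 2 * real (2 ^ (N ^ CARD('r))) * exp (-2 * real n * \<epsilon>X\<^sup>2)))"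
proof -
  define c where "c = 2 * L * real CARD('r) ^ 2 / real N ^ 2 + \<delta> + real CARD('r) * (real N ^ CARD('r) + 1) / real Mg
            + (\<epsilon>Z + 2 * real (Suc Mg ^ CARD('r)) * exp (-2 * real k * \<epsilon>Z\<^sup>2))"
  define inner where "inner xs = (\<integral>\<^sup>+ zs. (SUP x\<in>unit_cube. ennreal \<bar>cdf_vec P x - ecdf_vec k zs x\<bar>)
         \<partial>PiM {..<k} (\<lambda>_. priv_measure N n \<delta> xs))" for xs
  define g where "g xs = (if \<forall>i<n. xs i \<in> unit_cube then inner xs else 0)" for xs
  define SS where "SS = (bin_unions N :: (real^'r) set set)"
  have fin: "finite SS" and card_SS: "card SS \<le> 2 ^ (N ^ CARD('r))"
    unfolding SS_def using bin_unions_family[OF N] by auto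
  have SS_sets: "SS \<subseteq> sets P" unfolding SS_def using bin_unions_family(3)[OF N] by simp
  have c_nonneg: "0 \<le> c" unfolding c_def using L_nonneg d0 eZ by (intro add_nonneg_nonneg) auto
  have "expected_sup_error P n N k \<delta> = (\<integral>\<^sup>+ xs. g xs \<partial>PiM {..<n} (\<lambda>_. P))"
    unfolding expected_sup_error_def
    by (intro nn_integral_cong_AE AE_mp[OF AE_sample_in_cube AE_I2])
      (auto simp: g_def inner_def priv_measure_def)
  also have "\<dots> \<le> ennreal (c + 2 * (\<epsilon>X + 2 * real (card SS) * exp (-2 * real n * \<epsilon>X\<^sup>2)))"
  proof (rule nn_integral_le_by_deviation[OF P_prob n fin SS_sets eX c_nonneg])
    fix xs
    show "g xs \<le> ennreal (c + 2) \<and> (g xs \<le> ennreal (c + 2 * \<epsilon>X) \<or>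
      (\<exists>S\<in>SS. \<epsilon>X \<le> \<bar>empirical_freq n xs S - measure P S\<bar>))"
    proof (cases "\<forall>i<n. xs i \<in> unit_cube")
      case True
      have g_le: "g xs \<le> ennreal (c + hist_l1_error P N n xs)"
        using expected_error_given_sample[OF N n d0 d1 True k Mg eZ] True
        unfolding g_def inner_def c_def by (simp add: algebra_simps)
      have "g xs \<le> ennreal (c + b)" if "hist_l1_error P N n xs \<le> b" for b
        using g_le that by (metis add_left_mono ennreal_leI order_trans)
      thus ?thesis using hist_l1_error_bounds(1)[OF N n True] hist_l1_error_bounds(2)[OF N n True, of \<epsilon>X]
        unfolding SS_def by blast
    next
      case False
      thus ?thesis by (auto simp: g_def)
    qed
  qed simp
  also have "\<dots> \<le> ennreal (c + 2 * (\<epsilon>X + 2 * real (2 ^ (N ^ CARD('r)) :: nat) * exp (-2 * real n * \<epsilon>X\<^sup>2)))"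
    using card_SS by (intro ennreal_leI add_left_mono mult_left_mono mult_right_mono) (auto simp flip: of_nat_le_iff)
  finally show ?thesis unfolding c_def by simp
qed

end

lemma union_bound_at_hoeffding_level:
  fixes a m :: real
  assumes m: "m > 0" and am: "1 \<le> 2 * a * m"
  shows "2 * a * exp (-2 * m * (sqrt (ln (2 * a * m) / (2 * m)))\<^sup>2) = 1 / m"
proof -
  have "(sqrt (ln (2 * a * m) / (2 * m)))\<^sup>2 = ln (2 * a * m) / (2 * m)"
    using am m by (intro real_sqrt_pow2) auto
  hence "exp (-2 * m * (sqrt (ln (2 * a * m) / (2 * m)))\<^sup>2) = 1 / (2 * a * m)"
    using am m by (simp add: exp_minus inverse_eq_divide)
  moreover have "a \<noteq> 0" using am by auto
  ultimately show ?thesis using m by (simp add: field_simps)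
qed

text \<open>Throughout, \<open>x\<close> plays the role of the sample size \<open>n\<close> and
  \<open>w = x^(-2/(6+r))\<close> is the target rate; \<open>m = N^r\<close> and \<open>k\<close> satisfy \<open>m \<asymp> x^(r/(6+r))\<close>,
  \<open>k \<asymp> x^(4/(6+r))\<close>.\<close>
lemma inverse_square_le_rate:
  fixes N r :: nat and x c1 :: real
  assumes r: "r \<ge> 1" and x: "x \<ge> 1" and c1: "c1 > 0"
    and lb: "c1 * x powr (real r / (6 + real r)) \<le> real N ^ r"
  shows "1 / real N ^ 2 \<le> (1 / c1 powr (2 / real r)) * x powr (- (2 / (6 + real r)))"
proof -
  have xp: "x > 0" using x by simp
  have "0 < c1 * x powr (real r / (6 + real r))" using c1 xp by simp
  hence Nr: "real N ^ r > 0" using lb by linarith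
  have N: "real N > 0"
  proof (rule ccontr)
    assume "\<not> real N > 0"
    hence "N = 0" by simp
    thus False using Nr r by (simp add: power_0_left)
  qed
  have "(c1 * x powr (real r / (6 + real r))) powr (2 / real r) \<le> (real N ^ r) powr (2 / real r)"
    using lb c1 xp by (intro powr_mono2) auto
  also have "(real N ^ r) powr (2 / real r) = real N ^ 2"
  proof -
    have "(real N ^ r) powr (2 / real r) = (real N powr real r) powr (2 / real r)"
      using N by (simp add: powr_realpow)
    also have "\<dots> = real N powr 2" using r by (simp add: powr_powr)
    also have "\<dots> = real N ^ 2" using powr_realpow[OF N, of 2] by simp
    finally show ?thesis .
  qed
  also have "(c1 * x powr (real r / (6 + real r))) powr (2 / real r) = c1 powr (2 / real r) * x powr (2 / (6 + real r))"
    using c1 xp r by (simp add: powr_mult powr_powr)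
  finally have le: "c1 powr (2 / real r) * x powr (2 / (6 + real r)) \<le> real N ^ 2" .
  have pos: "0 < c1 powr (2 / real r) * x powr (2 / (6 + real r))" using c1 xp by simp
  have "1 / real N ^ 2 \<le> 1 / (c1 powr (2 / real r) * x powr (2 / (6 + real r)))"
    by (rule divide_left_mono[OF le]) (use pos N in auto)
  also have "\<dots> = (1 / c1 powr (2 / real r)) * x powr (- (2 / (6 + real r)))"
    by (simp add: powr_minus_divide)
  finally show ?thesis .
qed

lemma privacy_weight_le_rate:
  fixes r :: nat and x m kk c2 c4 \<alpha> :: real
  assumes x: "x \<ge> 1" and c2: "c2 > 0" and c4: "c4 > 0" and al: "\<alpha> > 0"
    and m0: "m \<ge> 0" and k0: "kk \<ge> 0"
    and ubm: "m \<le> c2 * x powr (real r / (6 + real r))" and ubk: "kk \<le> c4 * x powr (4 / (6 + real r))"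
  shows "m * kk / (x * \<alpha>) \<le> (c2 * c4 / \<alpha>) * x powr (- (2 / (6 + real r)))"
proof -
  have xp: "x > 0" using x by simp
  have "m * kk \<le> (c2 * x powr (real r / (6 + real r))) * (c4 * x powr (4 / (6 + real r)))"
    using ubm ubk m0 k0 c2 by (intro mult_mono) auto
  also have "\<dots> = c2 * c4 * x powr ((real r + 4) / (6 + real r))"
    by (simp add: powr_add[symmetric] add_divide_distrib)
  finally have "m * kk / (x * \<alpha>) \<le> c2 * c4 * x powr ((real r + 4) / (6 + real r)) / (x * \<alpha>)"
    using xp al by (intro divide_right_mono) auto
  also have "\<dots> = (c2 * c4 / \<alpha>) * (x powr ((real r + 4) / (6 + real r)) / x powr 1)"
    using xp by simp
  also have "x powr ((real r + 4) / (6 + real r)) / x powr 1 = x powr (- (2 / (6 + real r)))"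
  proof -
    have e: "- (2 / (6 + real r)) = (real r + 4) / (6 + real r) - 1" by (simp add: field_simps)
    show ?thesis unfolding e powr_diff using xp by simp
  qed
  finally show ?thesis .
qed

lemma inverse_le_rate:
  fixes r :: nat and x kk c3 :: real
  assumes x: "x \<ge> 1" and c3: "c3 > 0"
    and lbk: "c3 * x powr (4 / (6 + real r)) \<le> kk"
  shows "1 / kk \<le> (1 / c3) * x powr (- (2 / (6 + real r)))"
proof -
  have xp: "x > 0" using x by simp
  have pos: "0 < c3 * x powr (4 / (6 + real r))" using c3 xp by simp
  have "1 / kk \<le> 1 / (c3 * x powr (4 / (6 + real r)))"
    using lbk pos by (intro divide_left_mono) auto
  also have "\<dots> = (1 / c3) * x powr (- (4 / (6 + real r)))" by (simp add: powr_minus field_simps)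
  also have "\<dots> \<le> (1 / c3) * x powr (- (2 / (6 + real r)))"
    using c3 x by (intro mult_left_mono powr_mono) (auto simp: divide_right_mono)
  finally show ?thesis .
qed

lemma inverse_n_le_rate:
  fixes r :: nat and x :: real
  assumes x: "x \<ge> 1"
  shows "1 / x \<le> x powr (- (2 / (6 + real r)))"
proof -
  have "1 / x = x powr (-1)" using x by (simp add: powr_minus_divide)
  also have "\<dots> \<le> x powr (- (2 / (6 + real r)))" using x by (intro powr_mono) (auto simp: field_simps)
  finally show ?thesis .
qed

lemma ln_ge_1: "(x::real) \<ge> 3 \<Longrightarrow> ln x \<ge> 1"
proof -
  assume x: "x \<ge> 3"
  have "exp 1 \<le> x" using exp_le x by linarith
  hence "ln (exp 1) \<le> ln x" using x by (subst ln_le_cancel_iff) auto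
  thus ?thesis by simp
qed

lemma powr_le_self: "(x::real) \<ge> 1 \<Longrightarrow> a \<le> 1 \<Longrightarrow> x powr a \<le> x"
  using powr_mono[of a 1 x] by simp

lemma grid_size_le_linear:
  fixes r mN kN :: nat and x c2 c4 :: real
  assumes x: "x \<ge> 1" and c2: "c2 > 0" and c4: "c4 > 0"
    and m1: "mN \<ge> 1" and k1: "kN \<ge> 1"
    and ubm: "real mN \<le> c2 * x powr (real r / (6 + real r))"
    and ubk: "real kN \<le> c4 * x powr (4 / (6 + real r))"
  shows "real (Suc (mN * kN)) \<le> max 1 (2 * c2 * c4) * x" and "real kN \<le> max 1 c4 * x"
proof -
  have "real mN * real kN \<le> (c2 * x powr (real r / (6 + real r))) * (c4 * x powr (4 / (6 + real r)))"
    using ubm ubk c2 by (intro mult_mono) auto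
  also have "\<dots> = c2 * c4 * x powr ((real r + 4) / (6 + real r))"
    by (simp add: powr_add[symmetric] add_divide_distrib)
  also have "\<dots> \<le> c2 * c4 * x"
    using x c2 c4 by (intro mult_left_mono powr_le_self) auto
  finally have mk: "real mN * real kN \<le> c2 * c4 * x" .
  have "1 * 1 \<le> real mN * real kN" using m1 k1 by (intro mult_mono) auto
  hence "real (Suc (mN * kN)) \<le> 2 * (c2 * c4 * x)" using mk by simp
  also have "\<dots> \<le> max 1 (2 * c2 * c4) * x" using x by (simp add: mult_right_mono)
  finally show "real (Suc (mN * kN)) \<le> max 1 (2 * c2 * c4) * x" .
  have "c4 * x powr (4 / (6 + real r)) \<le> c4 * x"
    using x c4 by (intro mult_left_mono powr_le_self) auto
  hence "real kN \<le> c4 * x" using ubk by linarith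
  also have "\<dots> \<le> max 1 c4 * x" using x by (simp add: mult_right_mono)
  finally show "real kN \<le> max 1 c4 * x" .
qed

lemma ln_grid_count_le:
  fixes r M kN :: nat and x A C :: real
  assumes x: "x \<ge> 3" and A: "A \<ge> 1" and C: "C \<ge> 1" and k1: "kN \<ge> 1"
    and M: "real (Suc M) \<le> A * x" and K: "real kN \<le> C * x"
  shows "ln (2 * real (Suc M ^ r) * real kN) \<le> (1 + real r * ln A + ln C + real r + 1) * ln x"
proof -
  have lx: "ln x \<ge> 1" using ln_ge_1[OF x] .
  have pos: "0 < 2 * real (Suc M ^ r) * real kN" using k1 by simp
  have "ln (2 * real (Suc M ^ r) * real kN) \<le> ln (2 * (A * x) ^ r * (C * x))"
  proof (rule ln_mono[OF _ pos])
    have "real (Suc M ^ r) \<le> (A * x) ^ r" using M by (simp add: power_mono)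
    thus "2 * real (Suc M ^ r) * real kN \<le> 2 * (A * x) ^ r * (C * x)"
      using K k1 A x by (intro mult_mono) auto
  qed
  also have "\<dots> = ln 2 + real r * ln A + real r * ln x + ln C + ln x"
    using A C x by (simp add: ln_mult ln_realpow distrib_left)
  also have "\<dots> \<le> (1 + real r * ln A + ln C + real r + 1) * ln x"
  proof -
    have "ln 2 \<le> 1 * ln x" using lx ln_2_less_1 by linarith
    moreover have "real r * ln A \<le> (real r * ln A) * ln x"
      using mult_left_mono[OF lx, of "real r * ln A"] A by simp
    moreover have "ln C \<le> ln C * ln x"
      using mult_left_mono[OF lx, of "ln C"] C by simp
    ultimately show ?thesis by (simp add: algebra_simps)
  qed
  finally show ?thesis .
qed

lemma sqrt_le_rate:
  fixes X c x w :: real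
  assumes le: "X \<le> c * ln x * w ^ 2" and w: "w \<ge> 0"
  shows "sqrt X \<le> sqrt c * sqrt (ln x) * w"
proof -
  have "sqrt X \<le> sqrt (c * ln x * w ^ 2)" by (rule real_sqrt_le_mono[OF le])
  also have "\<dots> = sqrt c * sqrt (ln x) * w" using w by (simp add: real_sqrt_mult)
  finally show ?thesis .
qed

lemma synthetic_level_le_rate:
  fixes r mN kN :: nat and x c2 c3 c4 :: real
  assumes x: "x \<ge> 3" and c2: "c2 > 0" and c3: "c3 > 0" and c4: "c4 > 0"
    and m1: "mN \<ge> 1" and k1: "kN \<ge> 1"
    and ubm: "real mN \<le> c2 * x powr (real r / (6 + real r))"
    and lbk: "c3 * x powr (4 / (6 + real r)) \<le> real kN" and ubk: "real kN \<le> c4 * x powr (4 / (6 + real r))"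
  shows "sqrt (ln (2 * real (Suc (mN * kN) ^ r) * real kN) / (2 * real kN))
     \<le> sqrt ((1 + real r * ln (max 1 (2 * c2 * c4)) + ln (max 1 c4) + real r + 1) / (2 * c3)) * sqrt (ln x) * x powr (- (2 / (6 + real r)))"
proof -
  define K where "K = 1 + real r * ln (max 1 (2 * c2 * c4)) + ln (max 1 c4) + real r + 1"
  have x1: "x \<ge> 1" and xp: "x > 0" using x by auto
  note sizes = grid_size_le_linear[OF x1 c2 c4 m1 k1 ubm ubk]
  have lnY: "ln (2 * real (Suc (mN * kN) ^ r) * real kN) \<le> K * ln x"
    unfolding K_def by (rule ln_grid_count_le[OF x _ _ k1 sizes]) auto
  have "0 \<le> K * ln x" using ln_ge_1[OF x] by (simp add: K_def)
  hence "ln (2 * real (Suc (mN * kN) ^ r) * real kN) / (2 * real kN) \<le> K * ln x / (2 * (c3 * x powr (4 / (6 + real r))))"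
    using lnY lbk c3 xp by (intro frac_le) auto
  also have "\<dots> = (K / (2 * c3)) * ln x * (x powr (- (2 / (6 + real r)))) ^ 2"
  proof -
    have "(x powr (- (2 / (6 + real r)))) ^ 2 = x powr (- (4 / (6 + real r)))"
      using xp by (simp add: powr_powr[symmetric] power2_eq_square powr_add[symmetric])
    thus ?thesis using c3 xp by (simp add: powr_minus field_simps)
  qed
  finally show ?thesis unfolding K_def by (rule sqrt_le_rate) simp
qed

lemma data_level_le_rate:
  fixes r mN :: nat and x c2 :: real
  assumes x: "x \<ge> 3" and c2: "c2 > 0"
    and ubm: "real mN \<le> c2 * x powr (real r / (6 + real r))"
  shows "sqrt (ln (2 * real ((2::nat) ^ mN) * x) / (2 * x))
     \<le> sqrt (c2 / 2 + 1) * sqrt (ln x) * x powr (- (2 / (6 + real r)))"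
proof -
  define w where "w = x powr (- (2 / (6 + real r)))"
  have xp: "x > 0" and x1: "x \<ge> 1" using x by auto
  have lx: "ln x \<ge> 1" using ln_ge_1[OF x] .
  have w2: "w ^ 2 = x powr (- (4 / (6 + real r)))"
    unfolding w_def using xp by (simp add: power2_eq_square powr_add[symmetric])
  have "ln (2 * real ((2::nat) ^ mN) * x) = ln 2 + real mN * ln 2 + ln x"
    using xp by (simp add: ln_mult ln_realpow)
  also have "\<dots> \<le> 1 + real mN + ln x"
    by (smt (verit) mult_left_le of_nat_0_le_iff ln_2_less_1 ln_ge_zero)
  also have "\<dots> \<le> c2 * x powr (real r / (6 + real r)) + 2 * ln x" using ubm lx by linarith
  finally have lnle: "ln (2 * real ((2::nat) ^ mN) * x) \<le> c2 * x powr (real r / (6 + real r)) + 2 * ln x" .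
  have "ln (2 * real ((2::nat) ^ mN) * x) / (2 * x) \<le> (c2 * x powr (real r / (6 + real r)) + 2 * ln x) / (2 * x)"
    using lnle xp by (intro divide_right_mono) auto
  also have "\<dots> = (c2 / 2) * x powr (real r / (6 + real r) - 1) + ln x * x powr (-1)"
  proof -
    have e1: "x powr (real r / (6 + real r) - 1) = x powr (real r / (6 + real r)) / x"
      using xp by (simp add: powr_diff)
    have e2: "x powr (-1) = 1 / x" using xp by (simp add: powr_minus_divide)
    show ?thesis unfolding e1 e2 using xp by (simp add: field_simps)
  qed
  also have "\<dots> \<le> (c2 / 2) * w ^ 2 + ln x * w ^ 2"
  proof (intro add_mono mult_left_mono)
    show "x powr (real r / (6 + real r) - 1) \<le> w ^ 2" unfolding w2
      using x1 by (intro powr_mono) (auto simp: field_simps)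
    show "x powr (-1) \<le> w ^ 2" unfolding w2
      using x1 by (intro powr_mono) (auto simp: field_simps)
  qed (use c2 lx in auto)
  also have "\<dots> \<le> (c2 / 2 + 1) * ln x * w ^ 2"
  proof -
    have "c2 / 2 \<le> (c2 / 2) * ln x" using c2 lx by (simp add: mult_le_cancel_left1)
    hence "(c2 / 2) * w ^ 2 \<le> (c2 / 2) * ln x * w ^ 2" by (intro mult_right_mono) auto
    thus ?thesis by (simp add: algebra_simps)
  qed
  finally have le: "ln (2 * real ((2::nat) ^ mN) * x) / (2 * x) \<le> (c2 / 2 + 1) * ln x * w ^ 2" .
  from le show ?thesis unfolding w_def by (rule sqrt_le_rate) simp
qed

text \<open>The constant of the final rate, in terms of the dimension \<open>r\<close>, the Lipschitz constant,
  the privacy parameter and the constants \<open>c1 x^(r/(6+r)) \<le> N^r \<le> c2 x^(r/(6+r))\<close>,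
  \<open>c3 x^(4/(6+r)) \<le> k \<le> c4 x^(4/(6+r))\<close>.\<close>
definition rate_constant :: "nat \<Rightarrow> real \<Rightarrow> real \<Rightarrow> real \<Rightarrow> real \<Rightarrow> real \<Rightarrow> real \<Rightarrow> real" where
  "rate_constant r L \<alpha> c1 c2 c3 c4 =
     2 * L * real r ^ 2 * (1 / c1 powr (2 / real r)) + c2 * c4 / \<alpha> + 2 * real r * (1 / c3)
     + sqrt ((1 + real r * ln (max 1 (2 * c2 * c4)) + ln (max 1 c4) + real r + 1) / (2 * c3))
     + 1 / c3 + 2 * sqrt (c2 / 2 + 1) + 2"

lemma grid_term_le:
  fixes m k r :: nat
  assumes m: "m \<ge> 1" and k: "k \<ge> 1"
  shows "real r * (real m + 1) / real (m * k) \<le> 2 * real r * (1 / real k)"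
proof -
  have "real r * (real m + 1) / real (m * k) = real r * ((real m + 1) / real m) * (1 / real k)"
    by (simp add: field_simps)
  also have "(real m + 1) / real m \<le> 2" using m by (simp add: divide_le_eq)
  hence "real r * ((real m + 1) / real m) * (1 / real k) \<le> real r * 2 * (1 / real k)"
    using k by (intro mult_right_mono mult_left_mono) auto
  finally show ?thesis by (simp add: mult_ac)
qed

lemma error_terms_le_rate:
  fixes N k n r :: nat and L \<alpha> c1 c2 c3 c4 :: real
  assumes r: "r \<ge> 1" and n: "real n \<ge> 3" and L: "L \<ge> 0" and al: "\<alpha> > 0"
    and c1: "c1 > 0" and c2: "c2 > 0" and c3: "c3 > 0" and c4: "c4 > 0"
    and lbN: "c1 * real n powr (real r / (6 + real r)) \<le> real (N ^ r)"
    and ubN: "real (N ^ r) \<le> c2 * real n powr (real r / (6 + real r))"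
    and lbk: "c3 * real n powr (4 / (6 + real r)) \<le> real k"
    and ubk: "real k \<le> c4 * real n powr (4 / (6 + real r))"
  defines "Mg \<equiv> N ^ r * k"
  defines "eZ \<equiv> sqrt (ln (2 * real (Suc Mg ^ r) * real k) / (2 * real k))"
  defines "eX \<equiv> sqrt (ln (2 * real ((2::nat) ^ (N ^ r)) * real n) / (2 * real n))"
  shows "(2 * L * real r ^ 2 / real N ^ 2 + real (N ^ r) * real k / (real n * \<alpha>)
            + real r * (real N ^ r + 1) / real Mg
            + (eZ + 2 * real (Suc Mg ^ r) * exp (-2 * real k * eZ\<^sup>2)))
         + 2 * (eX + 2 * real ((2::nat) ^ (N ^ r)) * exp (-2 * real n * eX\<^sup>2))
     \<le> rate_constant r L \<alpha> c1 c2 c3 c4 * sqrt (ln (real n)) / real n powr (2 / (6 + real r))"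
  (is "?E \<le> _")
proof -
  define x where "x = real n"
  define w where "w = x powr (- (2 / (6 + real r)))"
  define sl where "sl = sqrt (ln x)"
  have x3: "x \<ge> 3" and x1: "x \<ge> 1" using n by (simp_all add: x_def)
  have sl1: "sl \<ge> 1" using ln_ge_1[OF x3] by (simp add: sl_def)
  have m1: "N ^ r \<ge> 1"
  proof -
    have "0 < c1 * real n powr (real r / (6 + real r))" using c1 n by simp
    hence "0 < real (N ^ r)" using lbN by linarith
    hence "0 < N ^ r" by (simp only: of_nat_0_less_iff)
    thus ?thesis by linarith
  qed
  have k1: "k \<ge> 1"
  proof -
    have "0 < c3 * real n powr (4 / (6 + real r))" using c3 n by simp
    hence "0 < real k" using lbk by linarith
    thus ?thesis by simp
  qed
  have bias: "2 * L * real r ^ 2 / real N ^ 2 \<le> 2 * L * real r ^ 2 * (1 / c1 powr (2 / real r)) * w"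
  proof -
    have "1 / real N ^ 2 \<le> (1 / c1 powr (2 / real r)) * w"
      unfolding w_def by (rule inverse_square_le_rate[OF r x1 c1]) (use lbN in \<open>simp add: x_def\<close>)
    from mult_left_mono[OF this, of "2 * L * real r ^ 2"] L show ?thesis by (simp add: mult.assoc)
  qed
  have privacy: "real (N ^ r) * real k / (real n * \<alpha>) \<le> c2 * c4 / \<alpha> * w"
    unfolding w_def using privacy_weight_le_rate[OF x1 c2 c4 al] ubN ubk by (simp add: x_def)
  have inv_k: "1 / real k \<le> (1 / c3) * w"
    unfolding w_def using inverse_le_rate[OF x1 c3] lbk by (simp add: x_def)
  have grid: "real r * (real N ^ r + 1) / real Mg \<le> 2 * real r * (1 / c3) * w"
  proof -
    have "real r * (real N ^ r + 1) / real Mg \<le> 2 * real r * (1 / real k)"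
      unfolding Mg_def using grid_term_le[OF m1 k1, of r] by simp
    also have "\<dots> \<le> 2 * real r * ((1 / c3) * w)" using inv_k by (intro mult_left_mono) auto
    finally show ?thesis by (simp add: mult.assoc)
  qed
  have union_Z: "2 * real (Suc Mg ^ r) * exp (-2 * real k * eZ\<^sup>2) = 1 / real k"
  proof -
    have "1 * 1 \<le> real (Suc Mg ^ r) * real k" using k1 by (intro mult_mono) (auto intro: one_le_power)
    thus ?thesis unfolding eZ_def using k1 by (intro union_bound_at_hoeffding_level) auto
  qed
  have union_X: "2 * real ((2::nat) ^ (N ^ r)) * exp (-2 * real n * eX\<^sup>2) = 1 / real n"
  proof -
    have "1 * 1 \<le> real ((2::nat) ^ (N ^ r)) * real n" using n by (intro mult_mono) auto
    thus ?thesis unfolding eX_def using n by (intro union_bound_at_hoeffding_level) auto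
  qed
  have level_Z: "eZ \<le> sqrt ((1 + real r * ln (max 1 (2 * c2 * c4)) + ln (max 1 c4) + real r + 1) / (2 * c3)) * sl * w"
    unfolding eZ_def Mg_def sl_def w_def
    by (rule synthetic_level_le_rate[OF x3 c2 c3 c4 m1 k1]) (use ubN lbk ubk in \<open>simp_all add: x_def\<close>)
  have level_X: "eX \<le> sqrt (c2 / 2 + 1) * sl * w"
    unfolding eX_def sl_def w_def x_def
    by (rule data_level_le_rate[OF _ c2]) (use ubN n in \<open>simp_all add: x_def\<close>)
  have inv_n: "1 / real n \<le> w" unfolding w_def x_def by (rule inverse_n_le_rate) (use n in simp)
  define A where "A = 2 * L * real r ^ 2 * (1 / c1 powr (2 / real r)) + c2 * c4 / \<alpha> + 2 * real r * (1 / c3) + 1 / c3 + 2"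
  define B where "B = sqrt ((1 + real r * ln (max 1 (2 * c2 * c4)) + ln (max 1 c4) + real r + 1) / (2 * c3)) + 2 * sqrt (c2 / 2 + 1)"
  have A: "A \<ge> 0" unfolding A_def using L c1 c2 c3 c4 al by (intro add_nonneg_nonneg) auto
  have w: "w \<le> sl * w" using sl1 by (simp add: w_def mult_le_cancel_right1)
  have "?E \<le> A * w + B * sl * w"
    unfolding union_Z union_X A_def B_def
    using bias privacy grid level_Z inv_k level_X inv_n by (simp add: algebra_simps)
  also have "\<dots> \<le> (A + B) * (sl * w)"
    using mult_left_mono[OF w A] by (simp add: algebra_simps)
  also have "A + B = rate_constant r L \<alpha> c1 c2 c3 c4"
    unfolding A_def B_def rate_constant_def by simp
  also have "sl * w = sqrt (ln (real n)) / real n powr (2 / (6 + real r))"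
    unfolding sl_def w_def x_def by (simp add: powr_minus divide_inverse)
  finally show ?thesis by simp
qed

lemma bigtheta_powr_bounds:
  fixes f :: "nat \<Rightarrow> real"
  assumes f: "f \<in> \<Theta>(\<lambda>n. real n powr a)" and nonneg: "\<And>n. f n \<ge> 0"
  obtains c c' where "c > 0" "c' > 0"
    "eventually (\<lambda>n. c * real n powr a \<le> f n \<and> f n \<le> c' * real n powr a) sequentially"
proof -
  have "f \<in> \<Omega>(\<lambda>n. real n powr a)" "f \<in> O(\<lambda>n. real n powr a)" using f by blast+
  from this(1) obtain c where c: "c > 0" and lo: "eventually (\<lambda>n. norm (f n) \<ge> c * norm (real n powr a)) sequentially"
    by (elim landau_omega.bigE) auto
  from \<open>f \<in> O(_)\<close> obtain c' where c': "c' > 0" and hi: "eventually (\<lambda>n. norm (f n) \<le> c' * norm (real n powr a)) sequentially"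
    by (elim landau_o.bigE) auto
  have "eventually (\<lambda>n. c * real n powr a \<le> f n \<and> f n \<le> c' * real n powr a) sequentially"
    using lo hi by eventually_elim (use nonneg in auto)
  thus ?thesis using that c c' by blast
qed

context lipschitz_cube_density
begin

lemma expected_sup_error_le_rate:
  fixes N k :: nat and c1 c2 c3 c4 :: real
  defines "r \<equiv> CARD('r)"
  assumes n: "real n \<ge> 3" and al: "\<alpha> > 0"
    and c1: "c1 > 0" and c2: "c2 > 0" and c3: "c3 > 0" and c4: "c4 > 0"
    and lbN: "c1 * real n powr (real r / (6 + real r)) \<le> real (N ^ r)"
    and ubN: "real (N ^ r) \<le> c2 * real n powr (real r / (6 + real r))"
    and lbk: "c3 * real n powr (4 / (6 + real r)) \<le> real k"
    and ubk: "real k \<le> c4 * real n powr (4 / (6 + real r))"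
    and small: "real n powr (- (2 / (6 + real r))) \<le> \<alpha> / (c2 * c4)"
  shows "expected_sup_error P n N k (real (N ^ r) * real k / (real n * \<alpha>))
     \<le> ennreal (rate_constant r L \<alpha> c1 c2 c3 c4 * sqrt (ln (real n)) / real n powr (2 / (6 + real r)))"
proof -
  define \<delta> where "\<delta> = real (N ^ r) * real k / (real n * \<alpha>)"
  define Mg where "Mg = N ^ r * k"
  have r1: "r \<ge> 1" unfolding r_def by (simp add: Suc_le_eq)
  have n0: "n > 0" using n by (cases n) auto
  have "0 < c1 * real n powr (real r / (6 + real r))" using c1 n0 by simp
  hence "0 < real (N ^ r)" using lbN by linarith
  hence N0: "N > 0" using r1 by (metis of_nat_0_less_iff neq0_conv power_0_left not_one_le_zero)
  have "0 < c3 * real n powr (4 / (6 + real r))" using c3 n0 by simp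
  hence k0: "k > 0" using lbk by simp
  have Mg0: "Mg > 0" unfolding Mg_def using N0 k0 by simp
  have d0: "0 \<le> \<delta>" unfolding \<delta>_def using al by simp
  have "\<delta> \<le> (c2 * c4 / \<alpha>) * real n powr (- (2 / (6 + real r)))"
    unfolding \<delta>_def by (rule privacy_weight_le_rate[OF _ c2 c4 al]) (use n ubN ubk in auto)
  also have "\<dots> \<le> 1" using small c2 c4 al by (simp add: field_simps)
  finally have d1: "\<delta> \<le> 1" .
  have "1 * 1 \<le> real (Suc Mg ^ r) * real k" using k0 by (intro mult_mono) (auto intro: one_le_power)
  moreover have "1 * 1 \<le> real ((2::nat) ^ (N ^ r)) * real n" using n by (intro mult_mono) auto
  ultimately have levels_nonneg: "0 \<le> sqrt (ln (2 * real (Suc Mg ^ r) * real k) / (2 * real k))"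
    "0 \<le> sqrt (ln (2 * real ((2::nat) ^ (N ^ r)) * real n) / (2 * real n))"
    by (auto intro!: divide_nonneg_nonneg ln_ge_zero simp: mult.assoc)
  note bound = expected_sup_error_bound[OF N0 n0 d0 d1 k0 Mg0 levels_nonneg, unfolded \<delta>_def Mg_def r_def]
  note terms = error_terms_le_rate[OF r1 n L_nonneg al c1 c2 c3 c4 lbN ubN lbk ubk, unfolded r_def]
  show ?thesis using order_trans[OF bound ennreal_leI[OF terms]] unfolding r_def .
qed

end

text \<open>The \<open>\<Theta>\<close>-hypotheses provide rate constants; eventually \<open>n \<ge> 3\<close>, the
  privacy weight is at most \<open>1\<close>, and all rate bounds hold, so the single-\<open>n\<close> bound applies.\<close>
theorem mainTheorem5:
  fixes p :: "real ^ 'r \<Rightarrow> real" and L \<alpha> :: real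
    and N k :: "nat \<Rightarrow> nat"
  assumes L_pos: "L > 0"
    and p_meas: "p \<in> borel_measurable borel"
    and p_nonneg: "\<forall>x\<in>unit_cube. 0 \<le> p x"
    and P_prob: "prob_space (density lborel (\<lambda>x. ennreal (indicator unit_cube x * p x)))"
    and p_lip: "\<forall>x\<in>unit_cube. \<forall>y\<in>unit_cube. \<bar>p x - p y\<bar> \<le> L * norm (x - y)"
    and alpha_pos: "\<alpha> > 0"
    and m_rate: "(\<lambda>n. real (N n ^ CARD('r))) \<in> \<Theta>(\<lambda>n. real n powr (real CARD('r) / (6 + real CARD('r))))"
    and k_rate: "(\<lambda>n. real (k n)) \<in> \<Theta>(\<lambda>n. real n powr (4 / (6 + real CARD('r))))"
  shows "\<exists>C. eventually (\<lambda>n.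
     expected_sup_error (density lborel (\<lambda>x. ennreal (indicator unit_cube x * p x))) n (N n) (k n)
        (real (N n ^ CARD('r)) * real (k n) / (real n * \<alpha>))
     \<le> ennreal (C * sqrt (ln (real n)) / real n powr (2 / (6 + real CARD('r))))) sequentially"
proof -
  interpret lipschitz_cube_density p L
    using cube_density.intro[OF p_meas p_nonneg P_prob] less_imp_le[OF L_pos] p_lip
    by (intro lipschitz_cube_density.intro lipschitz_cube_density_axioms.intro)
  obtain c1 c2 where c1: "c1 > 0" and c2: "c2 > 0" and ev_N: "eventually (\<lambda>n.
      c1 * real n powr (real CARD('r) / (6 + real CARD('r))) \<le> real (N n ^ CARD('r)) \<and>
      real (N n ^ CARD('r)) \<le> c2 * real n powr (real CARD('r) / (6 + real CARD('r)))) sequentially"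
    by (rule bigtheta_powr_bounds[OF m_rate of_nat_0_le_iff])
  obtain c3 c4 where c3: "c3 > 0" and c4: "c4 > 0" and ev_k: "eventually (\<lambda>n.
      c3 * real n powr (4 / (6 + real CARD('r))) \<le> real (k n) \<and>
      real (k n) \<le> c4 * real n powr (4 / (6 + real CARD('r)))) sequentially"
    by (rule bigtheta_powr_bounds[OF k_rate of_nat_0_le_iff])
  have "(\<lambda>n. real n powr (- (2 / (6 + real CARD('r))))) \<longlonglongrightarrow> 0"
    by (rule tendsto_neg_powr) (auto intro: filterlim_real_sequentially)
  from order_tendstoD(2)[OF this divide_pos_pos[OF alpha_pos mult_pos_pos[OF c2 c4]]]
  have ev_small: "eventually (\<lambda>n. real n powr (- (2 / (6 + real CARD('r)))) \<le> \<alpha> / (c2 * c4)) sequentially"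
    by (rule eventually_mono) simp
  have ev_n: "eventually (\<lambda>n. real n \<ge> 3) sequentially"
    using filterlim_real_sequentially by (simp add: filterlim_at_top)
  show ?thesis
    using eventually_conj[OF ev_n eventually_conj[OF ev_small eventually_conj[OF ev_N ev_k]]]
    by (intro exI[of _ "rate_constant CARD('r) L \<alpha> c1 c2 c3 c4"], elim eventually_mono)
      (blast intro: expected_sup_error_le_rate[OF _ alpha_pos c1 c2 c3 c4])
qed

end
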